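(* Let $q$ be a primitive $n$-th root of unity. There is a Hopf algebra duality pairing between ${\mathfrak c}_q[SL_2]$ and ${\mathfrak u}_q(sl_2)$ (the pairing of the co-double bosonisation with the double bosonisation, determined factorwise by $\langle X,F\rangle=1$, $\langle t,K\rangle=q$, $\langle Y,E\rangle=1$) under which, for $0\le i,j,k,i',j',k'\le n-1$, $$\langle X^it^jY^k,\;F^{i'}K^{j'}E^{k'}\rangle=\delta_{i,i'}\delta_{k,k'}\,q^{jj'}\,[i]_{q^{-1}}!\,[k]_q!.$$ Consequently $\Big\{\dfrac{X^i\delta_j(t)Y^k}{[i]_{q^{-1}}![k]_q!}\Big\}_{0\le i,j,k<n}$ is a dual basis to the basis $\{F^iK^jE^k\}_{0\le i,j,k<n}$ of ${\mathfrak u}_q(sl_2)$, where $\delta_j(t)=\frac1n\sum_{l=0}^{n-1}q^{-jl}t^l$.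
   Context: ${\mathfrak c}_q[SL_2]$ is the Hopf algebra generated by $X,t,Y$ with $X^n=Y^n=0$, $t^n=1$, $YX=XY$, $Xt=qtX$, $Yt=qtY$, $\Delta t=q\sum_{a=0}^{n-2}(q-1)^{a-1}(1-q^{-a-1})tY^a\otimes X^at$, $\Delta X=X\otimes1+\sum_{a=0}^{n-2}(q-1)^atY^a\otimes X^{a+1}$, $\Delta Y=1\otimes Y+\sum_{a=0}^{n-2}(1-q^{-1})^aY^{a+1}\otimes X^at$; it has basis $\{X^it^jY^k\}_{0\le i,j,k<n}$. ${\mathfrak u}_q(sl_2)$ is the Hopf algebra generated by $E,F,K$ with $E^n=F^n=0$, $K^n=1$, $KEK^{-1}=q^{-1}E$, $KFK^{-1}=qF$, $EF-FE=K-K^{-1}$, $\Delta K=K\otimes K$, $\Delta F=F\otimes1+K^{-1}\otimes F$, $\Delta E=E\otimes K+1\otimes E$; it has PBW basis $\{F^iK^jE^k\}_{0\le i,j,k<n}$. $[i]_q=(1-q^i)/(1-q)$, $[i]_q!=[i]_q[i-1]_q\cdots[1]_q$, $[0]_q!=1$. *)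

theory Defs
  imports Complex_Main
begin

text \<open>Elements of the free algebra over an alphabet 'a (with coefficients in the complex
numbers) are represented as coefficient functions on words; all elements used below have
finite support. Elements of the tensor square are coefficient functions on pairs of words.\<close>

type_synonym 'a fa = "'a list \<Rightarrow> complex"
type_synonym 'a fa2 = "'a list \<Rightarrow> 'a list \<Rightarrow> complex"

definition fa_word :: "'a list \<Rightarrow> 'a fa" where
  "fa_word w = (\<lambda>u. if u = w then 1 else 0)"

definition fa_mult :: "'a fa \<Rightarrow> 'a fa \<Rightarrow> 'a fa" where
  "fa_mult f g = (\<lambda>w. \<Sum>i\<le>length w. f (take i w) * g (drop i w))"

definition tens :: "'a fa \<Rightarrow> 'a fa \<Rightarrow> 'a fa2" where
  "tens f g = (\<lambda>u v. f u * g v)"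

definition fa2_mult :: "'a fa2 \<Rightarrow> 'a fa2 \<Rightarrow> 'a fa2" where
  "fa2_mult D E = (\<lambda>u v. \<Sum>i\<le>length u. \<Sum>j\<le>length v.
      D (take i u) (take j v) * E (drop i u) (drop j v))"

definition fa2_one :: "'a fa2" where
  "fa2_one = tens (fa_word []) (fa_word [])"

primrec coprodW :: "('a \<Rightarrow> 'a fa2) \<Rightarrow> 'a list \<Rightarrow> 'a fa2" where
  "coprodW d [] = fa2_one"
| "coprodW d (x # w) = fa2_mult (d x) (coprodW d w)"

definition counitW :: "('a \<Rightarrow> complex) \<Rightarrow> 'a list \<Rightarrow> complex" where
  "counitW e w = prod_list (map e w)"

definition supp :: "('b \<Rightarrow> complex) \<Rightarrow> 'b set" where
  "supp f = {w. f w \<noteq> 0}"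

definition supp2 :: "('b \<Rightarrow> 'c \<Rightarrow> complex) \<Rightarrow> ('b \<times> 'c) set" where
  "supp2 D = {(u, v). D u v \<noteq> 0}"

definition qint :: "complex \<Rightarrow> nat \<Rightarrow> complex" where
  "qint q i = (1 - q ^ i) / (1 - q)"

definition qfact :: "complex \<Rightarrow> nat \<Rightarrow> complex" where
  "qfact q i = (\<Prod>m\<in>{1..i}. qint q m)"

definition primitive_root_of_unity :: "nat \<Rightarrow> complex \<Rightarrow> bool" where
  "primitive_root_of_unity n q \<longleftrightarrow> 0 < n \<and> q ^ n = 1 \<and> (\<forall>m. 0 < m \<and> m < n \<longrightarrow> q ^ m \<noteq> 1)"

section \<open>The Hopf algebra c_q[SL_2] (generators X, t, Y)\<close>

datatype genA = GX | GT | GY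

fun coprodA_gen :: "complex \<Rightarrow> nat \<Rightarrow> genA \<Rightarrow> genA fa2" where
  "coprodA_gen q n GX = (\<lambda>u v. tens (fa_word [GX]) (fa_word []) u v
      + (\<Sum>a\<in>{0..<n-1}. (q - 1) ^ a *
           tens (fa_word (GT # replicate a GY)) (fa_word (replicate (a + 1) GX)) u v))"
| "coprodA_gen q n GT = (\<lambda>u v.
      (\<Sum>a\<in>{0..<n-1}. q * (q - 1) powi (int a - 1) * (1 - inverse q ^ (a + 1)) *
           tens (fa_word (GT # replicate a GY)) (fa_word (replicate a GX @ [GT])) u v))"
| "coprodA_gen q n GY = (\<lambda>u v. tens (fa_word []) (fa_word [GY]) u v
      + (\<Sum>a\<in>{0..<n-1}. (1 - inverse q) ^ a *
           tens (fa_word (replicate (a + 1) GY)) (fa_word (replicate a GX @ [GT])) u v))"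

definition coprodA :: "complex \<Rightarrow> nat \<Rightarrow> genA list \<Rightarrow> genA fa2" where
  "coprodA q n = coprodW (coprodA_gen q n)"

fun counitA_gen :: "genA \<Rightarrow> complex" where
  "counitA_gen GX = 0" | "counitA_gen GT = 1" | "counitA_gen GY = 0"

definition counitA :: "genA list \<Rightarrow> complex" where
  "counitA = counitW counitA_gen"

definition relsA :: "complex \<Rightarrow> nat \<Rightarrow> genA fa set" where
  "relsA q n = {
     fa_word (replicate n GX),
     fa_word (replicate n GY),
     (\<lambda>w. fa_word (replicate n GT) w - fa_word [] w),
     (\<lambda>w. fa_word [GY, GX] w - fa_word [GX, GY] w),
     (\<lambda>w. fa_word [GX, GT] w - q * fa_word [GT, GX] w),
     (\<lambda>w. fa_word [GY, GT] w - q * fa_word [GT, GY] w)}"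

definition monoA :: "nat \<Rightarrow> nat \<Rightarrow> nat \<Rightarrow> genA list" where
  "monoA i j k = replicate i GX @ replicate j GT @ replicate k GY"

section \<open>The Hopf algebra u_q(sl_2) (generators E, F, K)\<close>

datatype genU = GF | GK | GE

text \<open>Since K^n = 1, the inverse K^{-1} is K^{n-1}.\<close>
fun coprodU_gen :: "nat \<Rightarrow> genU \<Rightarrow> genU fa2" where
  "coprodU_gen n GK = tens (fa_word [GK]) (fa_word [GK])"
| "coprodU_gen n GF = (\<lambda>u v. tens (fa_word [GF]) (fa_word []) u v
      + tens (fa_word (replicate (n - 1) GK)) (fa_word [GF]) u v)"
| "coprodU_gen n GE = (\<lambda>u v. tens (fa_word [GE]) (fa_word [GK]) u v
      + tens (fa_word []) (fa_word [GE]) u v)"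

definition coprodU :: "nat \<Rightarrow> genU list \<Rightarrow> genU fa2" where
  "coprodU n = coprodW (coprodU_gen n)"

fun counitU_gen :: "genU \<Rightarrow> complex" where
  "counitU_gen GF = 0" | "counitU_gen GK = 1" | "counitU_gen GE = 0"

definition counitU :: "genU list \<Rightarrow> complex" where
  "counitU = counitW counitU_gen"

definition relsU :: "complex \<Rightarrow> nat \<Rightarrow> genU fa set" where
  "relsU q n = {
     fa_word (replicate n GE),
     fa_word (replicate n GF),
     (\<lambda>w. fa_word (replicate n GK) w - fa_word [] w),
     (\<lambda>w. fa_word [GK, GE] w - inverse q * fa_word [GE, GK] w),
     (\<lambda>w. fa_word [GK, GF] w - q * fa_word [GF, GK] w),
     (\<lambda>w. fa_word [GE, GF] w - fa_word [GF, GE] w - fa_word [GK] w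
            + fa_word (replicate (n - 1) GK) w)}"

definition monoU :: "nat \<Rightarrow> nat \<Rightarrow> nat \<Rightarrow> genU list" where
  "monoU i j k = replicate i GF @ replicate j GK @ replicate k GE"

text \<open>A pairing is given by its values on pairs of words and extended bilinearly.\<close>

definition pairL :: "(genA list \<Rightarrow> genU list \<Rightarrow> complex) \<Rightarrow> genA fa \<Rightarrow> genU list \<Rightarrow> complex" where
  "pairL P f x = (\<Sum>u\<in>supp f. f u * P u x)"

definition pairR :: "(genA list \<Rightarrow> genU list \<Rightarrow> complex) \<Rightarrow> genA list \<Rightarrow> genU fa \<Rightarrow> complex" where
  "pairR P a g = (\<Sum>v\<in>supp g. g v * P a v)"

definition pair2R :: "(genA list \<Rightarrow> genU list \<Rightarrow> complex) \<Rightarrow> genA list \<Rightarrow> genA list \<Rightarrow> genU fa2 \<Rightarrow> complex" where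
  "pair2R P a b D = (\<Sum>(v1, v2)\<in>supp2 D. D v1 v2 * P a v1 * P b v2)"

definition pair2L :: "(genA list \<Rightarrow> genU list \<Rightarrow> complex) \<Rightarrow> genA fa2 \<Rightarrow> genU list \<Rightarrow> genU list \<Rightarrow> complex" where
  "pair2L P D x y = (\<Sum>(u1, u2)\<in>supp2 D. D u1 u2 * P u1 x * P u2 y)"

text \<open>A Hopf algebra duality pairing between c_q[SL_2] and u_q(sl_2), i.e. a bilinear form on the
free algebras that vanishes on the defining ideals (so descends to the quotients) and satisfies
<ab,x> = <a \<otimes> b, \<Delta>x>, <a,xy> = <\<Delta>a, x \<otimes> y>, <1,x> = \<epsilon>(x), <a,1> = \<epsilon>(a).
(Compatibility with the antipodes is a consequence of these axioms.)\<close>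
definition hopf_pairing :: "complex \<Rightarrow> nat \<Rightarrow> (genA list \<Rightarrow> genU list \<Rightarrow> complex) \<Rightarrow> bool" where
  "hopf_pairing q n P \<longleftrightarrow>
     (\<forall>r\<in>relsA q n. \<forall>u v x. pairL P (fa_mult (fa_mult (fa_word u) r) (fa_word v)) x = 0) \<and>
     (\<forall>r\<in>relsU q n. \<forall>a u v. pairR P a (fa_mult (fa_mult (fa_word u) r) (fa_word v)) = 0) \<and>
     (\<forall>a b x. P (a @ b) x = pair2R P a b (coprodU n x)) \<and>
     (\<forall>a x y. P a (x @ y) = pair2L P (coprodA q n a) x y) \<and>
     (\<forall>x. P [] x = counitU x) \<and>
     (\<forall>a. P a [] = counitA a)"

definition dual_elt :: "complex \<Rightarrow> nat \<Rightarrow> nat \<Rightarrow> nat \<Rightarrow> nat \<Rightarrow> genA fa" where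
  "dual_elt q n i j k = (\<lambda>w. (1 / (qfact (inverse q) i * qfact q k)) *
      (\<Sum>l<n. (1 / of_nat n) * inverse q ^ (j * l) * fa_word (monoA i l k) w))"

end

theory Submission
  imports Defs
begin

(* The pairing is written down explicitly. In c_q[SL_2] every word in X, t, Y is a scalar
   multiple of an ordered monomial X^i t^j Y^k, so it suffices to know the table
   <X^i t^j Y^k, x> for words x in F, K, E; it is built by letting F, K, E act on tables,
   the action being read off from <a, g x> = <Delta a, g \<otimes> x>. The relations of
   u_q(sl_2) hold for this action (E^n vanishes because it commutes with E, F, K and kills
   the counit), those of c_q[SL_2] hold by construction of the normal ordering, and the
   pairing values on monomials come out directly. Multiplicativity in the first argument
   reduces to a twisted multiplicativity of the tables, proved by induction on x.
   Multiplicativity in the second argument is proved by induction on the number of E's and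
   F's in x; for a single generator of c_q[SL_2] it is an explicit q-integer computation.
   The dual basis then follows from the orthogonality of the characters l \<mapsto> q^(j l). *)

section \<open>Linear extension to finitely supported elements\<close>

definition lin_ext :: "'a fa \<Rightarrow> ('a list \<Rightarrow> complex) \<Rightarrow> complex" where
  "lin_ext f Q = (\<Sum>w\<in>supp f. f w * Q w)"

lemma pairL_lin_ext: "pairL P f x = lin_ext f (\<lambda>w. P w x)"
  unfolding pairL_def lin_ext_def by simp

lemma pairR_lin_ext: "pairR P a g = lin_ext g (\<lambda>v. P a v)"
  unfolding pairR_def lin_ext_def by simp

lemma lin_ext_scale: "lin_ext r (\<lambda>w. c * Q w) = c * lin_ext r Q"
  unfolding lin_ext_def by (simp add: sum_distrib_left algebra_simps)

lemma lin_ext_word_comb: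
  assumes "finite L"
  shows "lin_ext (\<lambda>w. \<Sum>l\<in>L. c l * fa_word (f l) w) Q = (\<Sum>l\<in>L. c l * Q (f l))"
proof -
  let ?S = "f ` L"
  have sub: "supp (\<lambda>w. \<Sum>l\<in>L. c l * fa_word (f l) w) \<subseteq> ?S"
  proof
    fix w assume "w \<in> supp (\<lambda>w. \<Sum>l\<in>L. c l * fa_word (f l) w)"
    then have "(\<Sum>l\<in>L. c l * fa_word (f l) w) \<noteq> 0" by (simp add: supp_def)
    then obtain l where "l \<in> L" "c l * fa_word (f l) w \<noteq> 0" by (meson sum.neutral)
    then show "w \<in> ?S" by (auto simp: fa_word_def split: if_splits)
  qed
  have "lin_ext (\<lambda>w. \<Sum>l\<in>L. c l * fa_word (f l) w) Q = (\<Sum>w\<in>?S. (\<Sum>l\<in>L. c l * fa_word (f l) w) * Q w)"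
    unfolding lin_ext_def
    by (rule sum.mono_neutral_left) (use assms sub in \<open>auto simp: supp_def\<close>)
  also have "\<dots> = (\<Sum>w\<in>?S. \<Sum>l\<in>L. c l * (if w = f l then Q (f l) else 0))"
    by (rule sum.cong[OF refl], unfold sum_distrib_right, rule sum.cong[OF refl]) (simp add: fa_word_def)
  also have "\<dots> = (\<Sum>l\<in>L. \<Sum>w\<in>?S. c l * (if w = f l then Q (f l) else 0))"
    by (rule sum.swap)
  also have "\<dots> = (\<Sum>l\<in>L. c l * Q (f l))"
  proof (rule sum.cong[OF refl])
    fix l assume l: "l \<in> L"
    have "(\<Sum>w\<in>?S. c l * (if w = f l then Q (f l) else 0)) = (\<Sum>w\<in>?S. if w = f l then c l * Q (f l) else 0)"
      by (rule sum.cong) auto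
    also have "\<dots> = c l * Q (f l)" using l assms by (subst sum.delta) auto
    finally show "(\<Sum>w\<in>?S. c l * (if w = f l then Q (f l) else 0)) = c l * Q (f l)" .
  qed
  finally show ?thesis .
qed

lemma lin_ext_word: "lin_ext (fa_word a) Q = Q a"
  using lin_ext_word_comb[of "{()}" "\<lambda>_. 1" "\<lambda>_. a" Q] by simp

lemma lin_ext_word_diff_scaled: "lin_ext (\<lambda>w. fa_word a w - c * fa_word b w) Q = Q a - c * Q b"
proof -
  have e: "(\<lambda>w. fa_word a w - c * fa_word b w) = (\<lambda>w. \<Sum>l\<in>{0::nat,1}. [1, -c] ! l * fa_word ([a,b] ! l) w)"
    by auto
  show ?thesis unfolding e by (subst lin_ext_word_comb) auto
qed

lemma lin_ext_word_diff: "lin_ext (\<lambda>w. fa_word a w - fa_word b w) Q = Q a - Q b"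
  using lin_ext_word_diff_scaled[of a 1 b Q] by simp

lemma lin_ext_word_comb4: "lin_ext (\<lambda>w. fa_word a w - fa_word b w - fa_word c w + fa_word d w) Q = Q a - Q b - Q c + Q d"
proof -
  have e: "(\<lambda>w. fa_word a w - fa_word b w - fa_word c w + fa_word d w)
     = (\<lambda>w. \<Sum>l\<in>{0::nat,1,2,3}. [1, -1, -1, 1] ! l * fa_word ([a,b,c,d] ! l) w)"
    by auto
  show ?thesis unfolding e by (subst lin_ext_word_comb) auto
qed

lemma fa_mult_word_left:
  "fa_mult (fa_word u) g w = (if length u \<le> length w \<and> take (length u) w = u then g (drop (length u) w) else 0)"
proof -
  have "fa_mult (fa_word u) g w = (\<Sum>i\<le>length w. if i = length u then (if take i w = u then g (drop i w) else 0) else 0)"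
    unfolding fa_mult_def by (rule sum.cong) (auto simp: fa_word_def)
  also have "\<dots> = (if length u \<le> length w \<and> take (length u) w = u then g (drop (length u) w) else 0)"
    by (subst sum.delta) auto
  finally show ?thesis .
qed

lemma fa_mult_word_right:
  "fa_mult g (fa_word v) w = (if length v \<le> length w \<and> drop (length w - length v) w = v then g (take (length w - length v) w) else 0)"
proof -
  have "fa_mult g (fa_word v) w = (\<Sum>i\<le>length w. if i = length w - length v then (if length v \<le> length w \<and> drop i w = v then g (take i w) else 0) else 0)"
    unfolding fa_mult_def by (rule sum.cong) (auto simp: fa_word_def)
  also have "\<dots> = (if length v \<le> length w \<and> drop (length w - length v) w = v then g (take (length w - length v) w) else 0)"
    by (subst sum.delta) auto
  finally show ?thesis .
qed

lemma fa_mult_sandwich: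
  "fa_mult (fa_mult (fa_word u) r) (fa_word v) w = (if \<exists>w'. w = u @ w' @ v then r (THE w'. w = u @ w' @ v) else 0)"
proof (cases "\<exists>w'. w = u @ w' @ v")
  case True
  then obtain w' where w: "w = u @ w' @ v" by blast
  have th: "(THE w'. w = u @ w' @ v) = w'" using w by auto
  show ?thesis using w th by (simp add: fa_mult_word_left fa_mult_word_right)
next
  case False
  have "fa_mult (fa_mult (fa_word u) r) (fa_word v) w = 0"
  proof (rule ccontr)
    assume nz: "fa_mult (fa_mult (fa_word u) r) (fa_word v) w \<noteq> 0"
    then have h1: "length v \<le> length w" "drop (length w - length v) w = v"
      and nz2: "fa_mult (fa_word u) r (take (length w - length v) w) \<noteq> 0"
      by (auto simp: fa_mult_word_right split: if_splits)
    let ?t = "take (length w - length v) w"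
    from nz2 have h2: "length u \<le> length ?t" "take (length u) ?t = u"
      by (auto simp: fa_mult_word_left split: if_splits)
    have "w = ?t @ v" using h1 by (metis append_take_drop_id)
    moreover have "?t = u @ drop (length u) ?t" using h2 by (metis append_take_drop_id)
    ultimately have "w = u @ drop (length u) ?t @ v" by (metis append.assoc)
    then show False using False by blast
  qed
  then show ?thesis using False by simp
qed

lemma lin_ext_sandwich:
  "lin_ext (fa_mult (fa_mult (fa_word u) r) (fa_word v)) Q = lin_ext r (\<lambda>w. Q (u @ w @ v))"
proof -
  let ?M = "fa_mult (fa_mult (fa_word u) r) (fa_word v)"
  have Mv: "?M (u @ w @ v) = r w" for w
    by (subst fa_mult_sandwich) auto
  have sM: "supp ?M = (\<lambda>w. u @ w @ v) ` supp r"
  proof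
    show "supp ?M \<subseteq> (\<lambda>w. u @ w @ v) ` supp r"
    proof
      fix w assume "w \<in> supp ?M"
      then have nz: "?M w \<noteq> 0" by (simp add: supp_def)
      then obtain w' where w: "w = u @ w' @ v" by (subst (asm) fa_mult_sandwich) (auto split: if_splits)
      then show "w \<in> (\<lambda>w. u @ w @ v) ` supp r" using nz Mv by (auto simp: supp_def)
    qed
    show "(\<lambda>w. u @ w @ v) ` supp r \<subseteq> supp ?M" using Mv by (auto simp: supp_def)
  qed
  have inj: "inj_on (\<lambda>w. u @ w @ v) (supp r)" by (auto intro: inj_onI)
  show ?thesis unfolding lin_ext_def sM sum.reindex[OF inj] by (simp add: Mv)
qed

definition lin_ext2 :: "'a fa2 \<Rightarrow> ('a list \<Rightarrow> 'a list \<Rightarrow> complex) \<Rightarrow> complex" where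
  "lin_ext2 D G = (\<Sum>(u,v)\<in>supp2 D. D u v * G u v)"

lemma lin_ext2_superset:
  assumes "finite S" "supp2 D \<subseteq> S"
  shows "lin_ext2 D G = (\<Sum>(u,v)\<in>S. D u v * G u v)"
  unfolding lin_ext2_def
  by (rule sum.mono_neutral_left) (use assms in \<open>auto simp: supp2_def\<close>)

lemma supp2_tens_sum:
  "supp2 (\<lambda>u v. \<Sum>i\<in>I. c i * tens (fa_word (f i)) (fa_word (g i)) u v) \<subseteq> (\<lambda>i. (f i, g i)) ` I"
proof
  fix p assume "p \<in> supp2 (\<lambda>u v. \<Sum>i\<in>I. c i * tens (fa_word (f i)) (fa_word (g i)) u v)"
  then obtain u v where p: "p = (u,v)" and nz: "(\<Sum>i\<in>I. c i * tens (fa_word (f i)) (fa_word (g i)) u v) \<noteq> 0"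
    by (auto simp: supp2_def)
  from nz obtain i where "i \<in> I" "c i * tens (fa_word (f i)) (fa_word (g i)) u v \<noteq> 0"
    by (meson sum.neutral)
  then show "p \<in> (\<lambda>i. (f i, g i)) ` I" using p
    by (auto simp: tens_def fa_word_def split: if_splits)
qed

lemma lin_ext2_tens_sum:
  assumes "finite I"
  shows "lin_ext2 (\<lambda>u v. \<Sum>i\<in>I. c i * tens (fa_word (f i)) (fa_word (g i)) u v) G
        = (\<Sum>i\<in>I. c i * G (f i) (g i))"
proof -
  let ?S = "(\<lambda>i. (f i, g i)) ` I"
  have "lin_ext2 (\<lambda>u v. \<Sum>i\<in>I. c i * tens (fa_word (f i)) (fa_word (g i)) u v) G
      = (\<Sum>(u,v)\<in>?S. (\<Sum>i\<in>I. c i * tens (fa_word (f i)) (fa_word (g i)) u v) * G u v)"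
    by (rule lin_ext2_superset[OF finite_imageI[OF assms] supp2_tens_sum])
  also have "\<dots> = (\<Sum>p\<in>?S. \<Sum>i\<in>I. c i * (if p = (f i, g i) then G (f i) (g i) else 0))"
  proof (rule sum.cong[OF refl])
    fix p assume "p \<in> ?S"
    obtain u v where p: "p = (u,v)" by (cases p)
    have "(\<Sum>i\<in>I. c i * tens (fa_word (f i)) (fa_word (g i)) u v) * G u v
        = (\<Sum>i\<in>I. c i * (if (u,v) = (f i, g i) then G (f i) (g i) else 0))"
      unfolding sum_distrib_right
      by (rule sum.cong[OF refl]) (simp add: tens_def fa_word_def)
    then show "(case p of (u, v) \<Rightarrow> (\<Sum>i\<in>I. c i * tens (fa_word (f i)) (fa_word (g i)) u v) * G u v)
        = (\<Sum>i\<in>I. c i * (if p = (f i, g i) then G (f i) (g i) else 0))" using p by simp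
  qed
  also have "\<dots> = (\<Sum>i\<in>I. \<Sum>p\<in>?S. c i * (if p = (f i, g i) then G (f i) (g i) else 0))"
    by (rule sum.swap)
  also have "\<dots> = (\<Sum>i\<in>I. c i * G (f i) (g i))"
  proof (rule sum.cong[OF refl])
    fix i assume i: "i \<in> I"
    have "(\<Sum>p\<in>?S. c i * (if p = (f i, g i) then G (f i) (g i) else 0))
        = (\<Sum>p\<in>?S. if p = (f i, g i) then c i * G (f i) (g i) else 0)"
      by (rule sum.cong) auto
    also have "\<dots> = c i * G (f i) (g i)"
      using i assms by (subst sum.delta) auto
    finally show "(\<Sum>p\<in>?S. c i * (if p = (f i, g i) then G (f i) (g i) else 0)) = c i * G (f i) (g i)" .
  qed
  finally show ?thesis .
qed

lemma finite_supp2_tens_sum: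
  "finite I \<Longrightarrow> finite (supp2 (\<lambda>u v. \<Sum>i\<in>I. c i * tens (fa_word (f i)) (fa_word (g i)) u v))"
  by (rule finite_subset[OF supp2_tens_sum]) auto

lemma supp2_add: "supp2 (\<lambda>u v. D u v + E u v) \<subseteq> supp2 D \<union> supp2 E"
  by (auto simp: supp2_def)

lemma lin_ext2_add_tensor:
  assumes "finite (supp2 D)" "finite (supp2 E)"
  shows "lin_ext2 (\<lambda>u v. D u v + E u v) G = lin_ext2 D G + lin_ext2 E G"
proof -
  let ?S = "supp2 D \<union> supp2 E"
  have 1: "lin_ext2 (\<lambda>u v. D u v + E u v) G = (\<Sum>(u,v)\<in>?S. (D u v + E u v) * G u v)"
    by (rule lin_ext2_superset) (use assms supp2_add in auto)
  have 2: "lin_ext2 D G = (\<Sum>(u,v)\<in>?S. D u v * G u v)"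
    by (rule lin_ext2_superset) (use assms in auto)
  have 3: "lin_ext2 E G = (\<Sum>(u,v)\<in>?S. E u v * G u v)"
    by (rule lin_ext2_superset) (use assms in auto)
  show ?thesis unfolding 1 2 3
    by (simp add: distrib_right sum.distrib split_def)
qed

lemma lin_ext2_cong:
  "(\<And>u v. (u,v) \<in> supp2 D \<Longrightarrow> G u v = G' u v) \<Longrightarrow> lin_ext2 D G = lin_ext2 D G'"
  unfolding lin_ext2_def by (rule sum.cong) auto

lemma lin_ext2_scale: "lin_ext2 D (\<lambda>u v. c * G u v) = c * lin_ext2 D G"
  unfolding lin_ext2_def by (simp add: sum_distrib_left split_def algebra_simps)

lemma lin_ext2_add: "lin_ext2 D (\<lambda>u v. G u v + H u v) = lin_ext2 D G + lin_ext2 D H"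
  unfolding lin_ext2_def by (simp add: sum.distrib split_def algebra_simps)

lemma lin_ext2_swap:
  "lin_ext2 D (\<lambda>u v. lin_ext2 E (F u v)) = lin_ext2 E (\<lambda>u' v'. lin_ext2 D (\<lambda>u v. F u v u' v'))"
  unfolding lin_ext2_def
  by (simp add: split_def sum_distrib_left sum_distrib_right mult.assoc mult.left_commute)
     (rule sum.swap)

lemma lin_ext2_tens: "lin_ext2 (tens (fa_word a) (fa_word b)) G = G a b"
proof -
  have "lin_ext2 (tens (fa_word a) (fa_word b)) G = lin_ext2 (\<lambda>u v. \<Sum>i\<in>{()}. 1 * tens (fa_word a) (fa_word b) u v) G"
    by simp
  also have "\<dots> = G a b" by (subst lin_ext2_tens_sum) auto
  finally show ?thesis .
qed

lemma lin_ext2_fa2_one: "lin_ext2 fa2_one G = G [] []"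
  unfolding fa2_one_def by (rule lin_ext2_tens)

lemma finite_supp2_tens: "finite (supp2 (tens (fa_word a) (fa_word b)))"
  using finite_supp2_tens_sum[of "{()}" "\<lambda>_. 1" "\<lambda>_. a" "\<lambda>_. b"] by simp

lemma lin_ext2_scale_both: "lin_ext2 D (\<lambda>v1 v2. (c1 * A v1) * (c2 * B v2)) = c1 * c2 * lin_ext2 D (\<lambda>v1 v2. A v1 * B v2)"
proof -
  have "(\<lambda>v1 v2. (c1 * A v1) * (c2 * B v2)) = (\<lambda>v1 v2. (c1 * c2) * (A v1 * B v2))"
    by (simp add: mult_ac)
  then show ?thesis by (simp add: lin_ext2_scale)
qed

lemma lin_ext2_scale_left: "lin_ext2 D (\<lambda>v1 v2. (c1 * A v1) * B v2) = c1 * lin_ext2 D (\<lambda>v1 v2. A v1 * B v2)"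
  using lin_ext2_scale_both[of D c1 A 1 B] by simp

lemma lin_ext2_scale_right: "lin_ext2 D (\<lambda>v1 v2. A v1 * (c2 * B v2)) = c2 * lin_ext2 D (\<lambda>v1 v2. A v1 * B v2)"
  using lin_ext2_scale_both[of D 1 A c2 B] by simp

lemma lin_ext2_mult: "lin_ext2 D F * lin_ext2 E G = lin_ext2 D (\<lambda>u v. lin_ext2 E (\<lambda>u' v'. F u v * G u' v'))"
proof -
  have "lin_ext2 D F * lin_ext2 E G = lin_ext2 D (\<lambda>u v. F u v * lin_ext2 E G)"
    unfolding lin_ext2_def by (simp add: sum_distrib_right split_def mult_ac)
  also have "\<dots> = lin_ext2 D (\<lambda>u v. lin_ext2 E (\<lambda>u' v'. F u v * G u' v'))"
    by (simp add: lin_ext2_scale)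
  finally show ?thesis .
qed

lemma lin_ext2_4swap:
  "lin_ext2 X (\<lambda>x1 x2. lin_ext2 Y (\<lambda>y1 y2. lin_ext2 G (\<lambda>u1 u2. lin_ext2 W (\<lambda>w1 w2. F x1 x2 y1 y2 u1 u2 w1 w2))))
 = lin_ext2 G (\<lambda>u1 u2. lin_ext2 W (\<lambda>w1 w2. lin_ext2 X (\<lambda>x1 x2. lin_ext2 Y (\<lambda>y1 y2. F x1 x2 y1 y2 u1 u2 w1 w2))))"
proof -
  have s1: "lin_ext2 Y (\<lambda>y1 y2. lin_ext2 G (\<lambda>u1 u2. lin_ext2 W (\<lambda>w1 w2. F x1 x2 y1 y2 u1 u2 w1 w2)))
     = lin_ext2 G (\<lambda>u1 u2. lin_ext2 W (\<lambda>w1 w2. lin_ext2 Y (\<lambda>y1 y2. F x1 x2 y1 y2 u1 u2 w1 w2)))" for x1 x2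
  proof -
    have "lin_ext2 Y (\<lambda>y1 y2. lin_ext2 G (\<lambda>u1 u2. lin_ext2 W (\<lambda>w1 w2. F x1 x2 y1 y2 u1 u2 w1 w2)))
      = lin_ext2 G (\<lambda>u1 u2. lin_ext2 Y (\<lambda>y1 y2. lin_ext2 W (\<lambda>w1 w2. F x1 x2 y1 y2 u1 u2 w1 w2)))"
      by (rule lin_ext2_swap)
    also have "\<dots> = lin_ext2 G (\<lambda>u1 u2. lin_ext2 W (\<lambda>w1 w2. lin_ext2 Y (\<lambda>y1 y2. F x1 x2 y1 y2 u1 u2 w1 w2)))"
      by (intro arg_cong[where f = "lin_ext2 G"] ext) (rule lin_ext2_swap)
    finally show ?thesis .
  qed
  have "lin_ext2 X (\<lambda>x1 x2. lin_ext2 Y (\<lambda>y1 y2. lin_ext2 G (\<lambda>u1 u2. lin_ext2 W (\<lambda>w1 w2. F x1 x2 y1 y2 u1 u2 w1 w2))))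
      = lin_ext2 X (\<lambda>x1 x2. lin_ext2 G (\<lambda>u1 u2. lin_ext2 W (\<lambda>w1 w2. lin_ext2 Y (\<lambda>y1 y2. F x1 x2 y1 y2 u1 u2 w1 w2))))"
    by (simp only: s1)
  also have "\<dots> = lin_ext2 G (\<lambda>u1 u2. lin_ext2 X (\<lambda>x1 x2. lin_ext2 W (\<lambda>w1 w2. lin_ext2 Y (\<lambda>y1 y2. F x1 x2 y1 y2 u1 u2 w1 w2))))"
    by (rule lin_ext2_swap)
  also have "\<dots> = lin_ext2 G (\<lambda>u1 u2. lin_ext2 W (\<lambda>w1 w2. lin_ext2 X (\<lambda>x1 x2. lin_ext2 Y (\<lambda>y1 y2. F x1 x2 y1 y2 u1 u2 w1 w2))))"
    by (intro arg_cong[where f = "lin_ext2 G"] ext) (rule lin_ext2_swap)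
  finally show ?thesis .
qed

lemma supp2_tens_word: "supp2 (tens (fa_word a) (fa_word b)) \<subseteq> {(a, b)}"
  by (auto simp: supp2_def tens_def fa_word_def split: if_splits)

definition append_pair :: "('a list \<times> 'a list) \<times> ('a list \<times> 'a list) \<Rightarrow> 'a list \<times> 'a list" where
  "append_pair x = (fst (fst x) @ fst (snd x), snd (fst x) @ snd (snd x))"

definition coeff_prod :: "'a fa2 \<Rightarrow> 'a fa2 \<Rightarrow> ('a list \<times> 'a list) \<times> ('a list \<times> 'a list) \<Rightarrow> complex" where
  "coeff_prod D E x = D (fst (fst x)) (snd (fst x)) * E (fst (snd x)) (snd (snd x))"

lemma fa2_mult_as_sum:
  assumes fD: "finite SD" and fE: "finite SE" and sD: "supp2 D \<subseteq> SD" and sE: "supp2 E \<subseteq> SE"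
  shows "fa2_mult D E w1 w2 = (\<Sum>x\<in>{x \<in> SD \<times> SE. append_pair x = (w1,w2)}. coeff_prod D E x)"
proof -
  define \<phi> where "\<phi> = (\<lambda>(i::nat,j::nat). ((take i w1, take j w2), (drop i w1, drop j w2)))"
  define K where "K = {ij \<in> {..length w1} \<times> {..length w2}. \<phi> ij \<in> SD \<times> SE}"
  have "fa2_mult D E w1 w2 = (\<Sum>ij\<in>{..length w1} \<times> {..length w2}. coeff_prod D E (\<phi> ij))"
    unfolding fa2_mult_def sum.cartesian_product coeff_prod_def \<phi>_def by (simp add: split_def)
  also have "\<dots> = (\<Sum>ij\<in>K. coeff_prod D E (\<phi> ij))"
  proof (rule sum.mono_neutral_right)
    show "\<forall>ij\<in>{..length w1} \<times> {..length w2} - K. coeff_prod D E (\<phi> ij) = 0"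
    proof
      fix ij assume "ij \<in> {..length w1} \<times> {..length w2} - K"
      then have "\<phi> ij \<notin> SD \<times> SE" unfolding K_def by auto
      then have "fst (\<phi> ij) \<notin> supp2 D \<or> snd (\<phi> ij) \<notin> supp2 E" using sD sE by (cases "\<phi> ij") auto
      then show "coeff_prod D E (\<phi> ij) = 0" unfolding coeff_prod_def supp2_def
        by (cases "\<phi> ij") auto
    qed
  qed (auto simp: K_def)
  also have "\<dots> = (\<Sum>x\<in>{x \<in> SD \<times> SE. append_pair x = (w1,w2)}. coeff_prod D E x)"
  proof (rule sum.reindex_bij_witness[where i = "\<lambda>x. (length (fst (fst x)), length (snd (fst x)))" and j = \<phi>])
    fix x assume "x \<in> {x \<in> SD \<times> SE. append_pair x = (w1, w2)}"
    then obtain u1 u2 v1 v2 where x: "x = ((u1,u2),(v1,v2))" "u1 @ v1 = w1" "u2 @ v2 = w2" "((u1,u2),(v1,v2)) \<in> SD \<times> SE"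
      unfolding append_pair_def by (cases x) auto
    show "\<phi> (length (fst (fst x)), length (snd (fst x))) = x"
      using x unfolding \<phi>_def by auto
    show "(length (fst (fst x)), length (snd (fst x))) \<in> K"
      using x unfolding K_def \<phi>_def by auto
  next
    fix ij assume ij: "ij \<in> K"
    obtain i j where e: "ij = (i,j)" by (cases ij)
    show "(length (fst (fst (\<phi> ij))), length (snd (fst (\<phi> ij)))) = ij"
      using ij unfolding K_def \<phi>_def e by auto
    show "\<phi> ij \<in> {x \<in> SD \<times> SE. append_pair x = (w1, w2)}"
      using ij unfolding K_def \<phi>_def e append_pair_def by auto
  qed simp
  finally show ?thesis .
qed

lemma supp2_fa2_mult:
  "supp2 (fa2_mult D E) \<subseteq> append_pair ` (supp2 D \<times> supp2 E)"
proof
  fix w assume "w \<in> supp2 (fa2_mult D E)"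
  then obtain w1 w2 where w: "w = (w1,w2)" and nz: "fa2_mult D E w1 w2 \<noteq> 0"
    by (auto simp: supp2_def)
  from nz obtain i where "i \<in> {..length w1}" and
     "(\<Sum>j\<le>length w2. D (take i w1) (take j w2) * E (drop i w1) (drop j w2)) \<noteq> 0"
    unfolding fa2_mult_def by (meson sum.neutral)
  then obtain j where "j \<in> {..length w2}" and
     "D (take i w1) (take j w2) * E (drop i w1) (drop j w2) \<noteq> 0"
    by (meson sum.neutral)
  then have "((take i w1, take j w2), (drop i w1, drop j w2)) \<in> supp2 D \<times> supp2 E"
    by (auto simp: supp2_def)
  moreover have "append_pair ((take i w1, take j w2), (drop i w1, drop j w2)) = w"
    using w by (simp add: append_pair_def)
  ultimately show "w \<in> append_pair ` (supp2 D \<times> supp2 E)" by force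
qed

lemma finite_supp2_fa2_mult:
  "finite (supp2 D) \<Longrightarrow> finite (supp2 E) \<Longrightarrow> finite (supp2 (fa2_mult D E))"
  by (rule finite_subset[OF supp2_fa2_mult]) auto

lemma lin_ext2_fa2_mult:
  assumes fD: "finite (supp2 D)" and fE: "finite (supp2 E)"
  shows "lin_ext2 (fa2_mult D E) G = lin_ext2 D (\<lambda>u1 u2. lin_ext2 E (\<lambda>v1 v2. G (u1 @ v1) (u2 @ v2)))"
proof -
  let ?S = "supp2 D \<times> supp2 E"
  let ?W = "append_pair ` ?S"
  have fS: "finite ?S" using fD fE by auto
  have "lin_ext2 (fa2_mult D E) G = (\<Sum>(w1,w2)\<in>?W. fa2_mult D E w1 w2 * G w1 w2)"
    by (rule lin_ext2_superset) (use fS supp2_fa2_mult in auto)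
  also have "\<dots> = (\<Sum>w\<in>?W. (\<Sum>x\<in>{x \<in> ?S. append_pair x = w}. coeff_prod D E x * G (fst (append_pair x)) (snd (append_pair x))))"
  proof (rule sum.cong[OF refl])
    fix w assume "w \<in> ?W"
    obtain w1 w2 where w: "w = (w1,w2)" by (cases w)
    have "fa2_mult D E w1 w2 = (\<Sum>x\<in>{x \<in> ?S. append_pair x = (w1,w2)}. coeff_prod D E x)"
      by (rule fa2_mult_as_sum) (use fD fE in auto)
    then have "fa2_mult D E w1 w2 * G w1 w2 = (\<Sum>x\<in>{x \<in> ?S. append_pair x = (w1,w2)}. coeff_prod D E x * G w1 w2)"
      by (simp add: sum_distrib_right)
    also have "\<dots> = (\<Sum>x\<in>{x \<in> ?S. append_pair x = (w1,w2)}. coeff_prod D E x * G (fst (append_pair x)) (snd (append_pair x)))"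
      by (rule sum.cong) auto
    finally show "(case w of (w1, w2) \<Rightarrow> fa2_mult D E w1 w2 * G w1 w2) =
       (\<Sum>x\<in>{x \<in> ?S. append_pair x = w}. coeff_prod D E x * G (fst (append_pair x)) (snd (append_pair x)))"
      using w by simp
  qed
  also have "\<dots> = (\<Sum>x\<in>?S. coeff_prod D E x * G (fst (append_pair x)) (snd (append_pair x)))"
    by (rule sum.group) (use fS in auto)
  also have "\<dots> = (\<Sum>p\<in>supp2 D. \<Sum>p'\<in>supp2 E. coeff_prod D E (p,p') * G (fst (append_pair (p,p'))) (snd (append_pair (p,p'))))"
    by (rule sum.cartesian_product')
  also have "\<dots> = lin_ext2 D (\<lambda>u1 u2. lin_ext2 E (\<lambda>v1 v2. G (u1 @ v1) (u2 @ v2)))"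
    unfolding lin_ext2_def sum_distrib_left
    by (simp add: split_def coeff_prod_def append_pair_def mult.assoc)
  finally show ?thesis .
qed

lemma finite_supp2_coprodW:
  assumes "\<And>g. finite (supp2 (d g))"
  shows "finite (supp2 (coprodW d w))"
  by (induction w) (auto simp: fa2_one_def finite_supp2_tens assms intro: finite_supp2_fa2_mult)

lemma lin_ext2_coprodW_Cons:
  assumes "\<And>g. finite (supp2 (d g))"
  shows "lin_ext2 (coprodW d (g # w)) G = lin_ext2 (d g) (\<lambda>u1 u2. lin_ext2 (coprodW d w) (\<lambda>v1 v2. G (u1 @ v1) (u2 @ v2)))"
  by (simp add: lin_ext2_fa2_mult assms finite_supp2_coprodW)

lemma lin_ext2_coprodW_Nil: "lin_ext2 (coprodW d []) G = G [] []"
  by (simp add: lin_ext2_fa2_one)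

lemma lin_ext2_coprodW_append:
  assumes "\<And>g. finite (supp2 (d g))"
  shows "lin_ext2 (coprodW d (x @ y)) G = lin_ext2 (coprodW d x) (\<lambda>u1 u2. lin_ext2 (coprodW d y) (\<lambda>v1 v2. G (u1 @ v1) (u2 @ v2)))"
proof (induction x arbitrary: G)
  case Nil
  then show ?case by (simp add: lin_ext2_fa2_one)
next
  case (Cons g x)
  show ?case
    by (simp only: append_Cons lin_ext2_coprodW_Cons[OF assms] Cons append_assoc)
qed

lemma pair2R_lin_ext2: "pair2R P a b D = lin_ext2 D (\<lambda>v1 v2. P a v1 * P b v2)"
  unfolding pair2R_def lin_ext2_def by (simp add: split_def mult.assoc)

lemma pair2L_lin_ext2: "pair2L P D x y = lin_ext2 D (\<lambda>u1 u2. P u1 x * P u2 y)"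
  unfolding pair2L_def lin_ext2_def by (simp add: split_def mult.assoc)

lemma counitU_append: "counitU (x @ y) = counitU x * counitU y"
  by (simp add: counitU_def counitW_def)

section \<open>q-integers\<close>

lemma qint_0: "qint c 0 = 0" by (simp add: qint_def)

lemma qint_1: "q \<noteq> 1 \<Longrightarrow> qint q 1 = 1"
  unfolding qint_def by simp

lemma qint_Suc: "q \<noteq> 1 \<Longrightarrow> qint q (Suc m) = 1 + q * qint q m"
  unfolding qint_def by (simp add: field_simps)

lemma qint_add: "c \<noteq> 1 \<Longrightarrow> qint c (a + b) = qint c a + c ^ a * qint c b"
  unfolding qint_def by (simp add: field_simps power_add)

lemma qfact_Suc: "qfact q (Suc s) = qfact q s * qint q (Suc s)"
  unfolding qfact_def by (simp add: prod.nat_ivl_Suc')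

lemma qfact_prod: "qfact c i = (\<Prod>m<i. qint c (i - m))"
proof (induction i)
  case 0 then show ?case by (simp add: qfact_def)
next
  case (Suc i)
  have "(\<Prod>m<Suc i. qint c (Suc i - m)) = qint c (Suc i) * (\<Prod>m<i. qint c (Suc i - Suc m))"
    using prod.lessThan_Suc_shift[of "\<lambda>m. qint c (Suc i - m)" i] by simp
  also have "\<dots> = qint c (Suc i) * qfact c i" using Suc by simp
  finally show ?case by (simp add: qfact_Suc mult.commute)
qed

lemma qint_inverse_commutator:
  fixes q :: complex
  assumes "q \<noteq> 0" "q \<noteq> 1"
  shows "(q ^ (Suc i + j) - inverse q ^ j) * qint (inverse q) (Suc (Suc i))
       - qint (inverse q) (Suc i) * (q ^ (i + j) - inverse q ^ j) = q ^ (Suc i + j) - inverse q ^ (Suc i + j)"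
proof -
  define a b where "a = q ^ i" and "b = q ^ j"
  have ab: "a \<noteq> 0" "b \<noteq> 0" using assms by (auto simp: a_def b_def)
  have "(a * q * b - inverse b) * (1 - inverse (a * q * q)) - (a * b - inverse b) * (1 - inverse (a * q))
      = (a * q * b - inverse (a * q * b)) * (1 - inverse q)"
    using ab assms by (simp add: field_simps)
  moreover have "1 - inverse q \<noteq> 0" using assms by (simp add: field_simps)
  ultimately have "(a * q * b - inverse b) * ((1 - inverse (a * q * q)) / (1 - inverse q))
       - ((1 - inverse (a * q)) / (1 - inverse q)) * (a * b - inverse b) = a * q * b - inverse (a * q * b)"
    by (simp add: diff_divide_distrib[symmetric] mult.commute)
  then show ?thesis
    by (simp add: a_def b_def qint_def power_add power_inverse mult_ac)
qed

section \<open>Normal ordering in c_q[SL_2]\<close>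

lemma count_list_replicate [simp]:
  "count_list (replicate m x) y = (if x = y then m else 0)"
  by (induction m) auto

(* A word w equals normal_factor q w * X^#X t^#t Y^#Y in c_q[SL_2]: moving an X left past a t
   costs q^-1 and moving a t left past a Y costs q. *)
fun normal_factor :: "complex \<Rightarrow> genA list \<Rightarrow> complex" where
  "normal_factor q [] = 1"
| "normal_factor q (GX # w) = normal_factor q w"
| "normal_factor q (GT # w) = inverse q ^ count_list w GX * normal_factor q w"
| "normal_factor q (GY # w) = q ^ count_list w GT * normal_factor q w"

lemma normal_factor_append:
  "normal_factor q (u @ s) = normal_factor q u * normal_factor q s * q ^ (count_list u GY * count_list s GT) * inverse q ^ (count_list u GT * count_list s GX)"
proof (induction u)
  case Nil then show ?case by simp
next
  case (Cons g u)
  show ?case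
  proof (cases g)
    case GX then show ?thesis using Cons by simp
  next
    case GT then show ?thesis using Cons by (simp add: power_add algebra_simps)
  next
    case GY then show ?thesis using Cons by (simp add: power_add algebra_simps)
  qed
qed

lemma normal_factor_X_prefix [simp]: "normal_factor q (replicate i GX @ w) = normal_factor q w"
  by (induction i) auto

lemma normal_factor_Y_prefix [simp]: "normal_factor q (replicate a GY @ w) = q ^ (a * count_list w GT) * normal_factor q w"
  by (induction a) (auto simp: power_add mult_ac)

lemma normal_factor_X_power [simp]: "normal_factor q (replicate a GX) = 1"
  using normal_factor_X_prefix[of q a "[]"] by simp

lemma normal_factor_Y_power [simp]: "normal_factor q (replicate a GY) = 1"
  using normal_factor_Y_prefix[of q a "[]"] by simp

lemma normal_factor_T_Y_powers: "normal_factor q (replicate j GT @ replicate k GY) = 1"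
proof (induction j)
  case 0 show ?case by (induction k) auto
next
  case (Suc j) then show ?case by simp
qed

lemma normal_factor_monoA: "normal_factor q (monoA i j k) = 1"
  unfolding monoA_def by (simp add: normal_factor_X_prefix normal_factor_T_Y_powers)

lemma count_list_monoA[simp]: "count_list (monoA i j k) GX = i" "count_list (monoA i j k) GT = j" "count_list (monoA i j k) GY = k"
  by (auto simp: monoA_def)

lemma normal_factor_T_only: "count_list a GX = 0 \<Longrightarrow> count_list a GY = 0 \<Longrightarrow> normal_factor q a = 1"
proof (induction a)
  case Nil then show ?case by simp
next
  case (Cons g a) then show ?case by (cases g) (auto split: if_splits)
qed

lemma counitA_gen_eq_count: "counitW counitA_gen a = (if count_list a GX = 0 \<and> count_list a GY = 0 then 1 else 0)"
proof (induction a)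
  case Nil then show ?case by (simp add: counitW_def)
next
  case (Cons g a) then show ?case by (cases g) (auto simp: counitW_def)
qed

lemma geometric_sum_atMost:
  fixes x :: "'a :: comm_ring_1"
  shows "(\<Sum>b\<le>s. x ^ b) * (x - 1) = x ^ (s + 1) - 1"
  by (induction s) (auto simp: algebra_simps)

lemma geometric_sum_convolution:
  fixes x :: "'a :: comm_ring_1"
  shows "(x * x - 1) * (x ^ (s + 1) * (\<Sum>b\<le>s. x ^ b) - (\<Sum>b\<le>s. x ^ b * x ^ b))
       = (x ^ (s + 2) - 1) * (x ^ (s + 1) - 1)"
proof -
  have g2: "(\<Sum>b\<le>s. x ^ b * x ^ b) * (x * x - 1) = x ^ (s + 1) * x ^ (s + 1) - 1"
    using geometric_sum_atMost[of "x * x" s] by (simp add: power_mult_distrib)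
  have "(x * x - 1) * (x ^ (s + 1) * (\<Sum>b\<le>s. x ^ b) - (\<Sum>b\<le>s. x ^ b * x ^ b))
      = (x + 1) * x ^ (s + 1) * ((\<Sum>b\<le>s. x ^ b) * (x - 1)) - (\<Sum>b\<le>s. x ^ b * x ^ b) * (x * x - 1)"
    by (simp add: algebra_simps)
  also have "\<dots> = (x + 1) * x ^ (s + 1) * (x ^ (s + 1) - 1) - (x ^ (s + 1) * x ^ (s + 1) - 1)"
    by (simp only: geometric_sum_atMost g2)
  also have "\<dots> = (x ^ (s + 2) - 1) * (x ^ (s + 1) - 1)"
    by (simp add: algebra_simps)
  finally show ?thesis .
qed

lemma sum_square_triangle:
  fixes f :: "nat \<Rightarrow> nat \<Rightarrow> complex"
  assumes "M \<le> N"
  shows "(\<Sum>a<N. \<Sum>b<N. if a + b < M then f a b else 0) = (\<Sum>s<M. \<Sum>a\<le>s. f a (s - a))"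
proof -
  have "(\<Sum>a<N. \<Sum>b<N. if a + b < M then f a b else 0) = (\<Sum>(a,b)\<in>{..<N} \<times> {..<N}. if a + b < M then f a b else 0)"
    by (rule sum.cartesian_product)
  also have "\<dots> = (\<Sum>(a,b)\<in>{(a,b). a + b < M}. f a b)"
  proof (rule sum.mono_neutral_cong_right)
    show "{(a, b). a + b < M} \<subseteq> {..<N} \<times> {..<N}" using assms by auto
  qed (auto split: if_splits)
  also have "\<dots> = (\<Sum>s<M. \<Sum>a\<le>s. f a (s - a))"
    by (rule sum.triangle_reindex)
  finally show ?thesis .
qed

lemma sum_lessThan_Suc_shift_0:
  fixes g :: "nat \<Rightarrow> complex"
  assumes "g 0 = 0"
  shows "(\<Sum>a<Suc m. g a) = (\<Sum>s<m. g (Suc s))"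
  using sum.lessThan_Suc_shift[of g m] assms by simp

lemma sum_delta_0: "(\<Sum>a<(m::nat). (c a :: complex) * ((if a = 0 then 1 else 0) * f a)) = (if 0 < m then c 0 * f 0 else 0)"
proof -
  have "(\<Sum>a<m. c a * ((if a = 0 then 1 else 0) * f a)) = (\<Sum>a<m. if a = 0 then c a * f a else 0)"
    by (rule sum.cong) auto
  also have "\<dots> = (if 0 \<in> {..<m} then c 0 * f 0 else 0)"
    by (rule sum.delta) simp
  finally show ?thesis by simp
qed

definition EF_count :: "genU list \<Rightarrow> nat" where "EF_count x = count_list x GE + count_list x GF"

lemma supp2_coprodU_gen_EF_count: "(u1, u2) \<in> supp2 (coprodU_gen n h) \<Longrightarrow> EF_count u1 \<le> EF_count [h] \<and> EF_count u2 \<le> EF_count [h]"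
proof (cases h)
  case GF
  assume a: "(u1, u2) \<in> supp2 (coprodU_gen n h)"
  then have "(u1, u2) \<in> supp2 (tens (fa_word [GF]) (fa_word [])) \<union> supp2 (tens (fa_word (replicate (n - 1) GK)) (fa_word [GF]))"
    using GF supp2_add[of "tens (fa_word [GF]) (fa_word [])" "tens (fa_word (replicate (n - 1) GK)) (fa_word [GF])"]
    by (auto simp: coprodU_gen.simps)
  then show ?thesis using GF supp2_tens_word by (fastforce simp: EF_count_def)
next
  case GK
  assume a: "(u1, u2) \<in> supp2 (coprodU_gen n h)"
  then show ?thesis using GK supp2_tens_word by (fastforce simp: EF_count_def coprodU_gen.simps)
next
  case GE
  assume a: "(u1, u2) \<in> supp2 (coprodU_gen n h)"
  then have "(u1, u2) \<in> supp2 (tens (fa_word [GE]) (fa_word [GK])) \<union> supp2 (tens (fa_word []) (fa_word [GE]))"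
    using GE supp2_add[of "tens (fa_word [GE]) (fa_word [GK])" "tens (fa_word []) (fa_word [GE])"]
    by (auto simp: coprodU_gen.simps)
  then show ?thesis using GE supp2_tens_word by (fastforce simp: EF_count_def)
qed

lemma supp2_coprodU_EF_count: "(x1, x2) \<in> supp2 (coprodU n x) \<Longrightarrow> EF_count x1 \<le> EF_count x \<and> EF_count x2 \<le> EF_count x"
proof (induction x arbitrary: x1 x2)
  case Nil
  then have "(x1, x2) \<in> supp2 (tens (fa_word []) (fa_word []))" by (simp add: coprodU_def fa2_one_def)
  then show ?case using supp2_tens_word by (fastforce simp: EF_count_def)
next
  case (Cons h x)
  then have "(x1, x2) \<in> append_pair ` (supp2 (coprodU_gen n h) \<times> supp2 (coprodU n x))"
    using supp2_fa2_mult by (fastforce simp: coprodU_def)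
  then obtain u1 u2 v1 v2 where "(u1, u2) \<in> supp2 (coprodU_gen n h)" "(v1, v2) \<in> supp2 (coprodU n x)"
    "x1 = u1 @ v1" "x2 = u2 @ v2"
    by (auto simp: append_pair_def)
  then show ?case using supp2_coprodU_gen_EF_count Cons.IH by (fastforce simp: EF_count_def)
qed

locale primitive_root =
  fixes q :: complex and n :: nat
  assumes n_gt_1: "1 < n" and q_primitive: "primitive_root_of_unity n q"
begin

lemma q_pow_n: "q ^ n = 1" using q_primitive by (simp add: primitive_root_of_unity_def)

lemma q_nonzero: "q \<noteq> 0" using q_pow_n n_gt_1 by (cases "q = 0") (auto simp: power_0_left)

lemma q_neq_1: "q \<noteq> 1"
proof
  assume "q = 1"
  then have "q ^ 1 = 1" by simp
  then show False using q_primitive n_gt_1 by (auto simp: primitive_root_of_unity_def)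
qed

lemma q_pow_neq_1: "0 < m \<Longrightarrow> m < n \<Longrightarrow> q ^ m \<noteq> 1"
  using q_primitive by (auto simp: primitive_root_of_unity_def)

lemma inv_q_pow_n: "inverse q ^ n = 1" using q_pow_n by (simp add: power_inverse)

lemma inv_q_neq_1: "inverse q \<noteq> 1" using q_neq_1 by (metis inverse_1 inverse_inverse_eq)

lemma inv_q_pow_neq_1: "0 < m \<Longrightarrow> m < n \<Longrightarrow> inverse q ^ m \<noteq> 1"
  using q_pow_neq_1 by (metis inverse_1 inverse_inverse_eq power_inverse)

lemma qint_n_eq_0: "qint q n = 0" using q_pow_n by (simp add: qint_def)

lemma qint_inv_n_eq_0: "qint (inverse q) n = 0" using inv_q_pow_n by (simp add: qint_def)

lemma qint_nonzero: "0 < m \<Longrightarrow> m < n \<Longrightarrow> qint q m \<noteq> 0"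
  using q_pow_neq_1 q_neq_1 by (auto simp: qint_def)

lemma qint_inv_nonzero: "0 < m \<Longrightarrow> m < n \<Longrightarrow> qint (inverse q) m \<noteq> 0"
  using inv_q_pow_neq_1 inv_q_neq_1 by (auto simp: qint_def)

section \<open>The dual action of u_q(sl_2) on tables\<close>

(* A table f i j k stands for the values <X^i t^j Y^k, x> of a functional x, and dual_act g f
   is the table of g x: in <Delta(X^i t^j Y^k), g \<otimes> x> only the terms whose left factor
   pairs nontrivially with the generator g survive. Tables vanish unless i, k < n, since
   X^n = Y^n = 0. *)
definition dual_act :: "genU \<Rightarrow> (nat \<Rightarrow> nat \<Rightarrow> nat \<Rightarrow> complex) \<Rightarrow> nat \<Rightarrow> nat \<Rightarrow> nat \<Rightarrow> complex" where
  "dual_act g f i j k = (if i < n \<and> k < n then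
      (case g of
         GF \<Rightarrow> (if 0 < i then qint (inverse q) i * f (i - 1) j k else 0)
       | GK \<Rightarrow> q ^ (i + j) * f i j k
       | GE \<Rightarrow> (if 0 < k then qint q k * f i (Suc j) (k - 1) else 0)
              + (if Suc i < n then (q ^ (i + j) - inverse q ^ j) * f (Suc i) j k else 0))
     else 0)"

lemma dual_act_F: "dual_act GF f i j k = (if i < n \<and> k < n \<and> 0 < i then qint (inverse q) i * f (i - 1) j k else 0)"
  by (simp add: dual_act_def)

lemma dual_act_K: "dual_act GK f i j k = (if i < n \<and> k < n then q ^ (i + j) * f i j k else 0)"
  by (simp add: dual_act_def)

lemma dual_act_E: "dual_act GE f i j k = (if i < n \<and> k < n then
      (if 0 < k then qint q k * f i (Suc j) (k - 1) else 0)
    + (if Suc i < n then (q ^ (i + j) - inverse q ^ j) * f (Suc i) j k else 0) else 0)"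
  by (simp add: dual_act_def)

definition mono_counit :: "nat \<Rightarrow> nat \<Rightarrow> nat \<Rightarrow> complex" where
  "mono_counit i j k = (if i = 0 \<and> k = 0 then 1 else 0)"

definition mono_pair :: "genU list \<Rightarrow> nat \<Rightarrow> nat \<Rightarrow> nat \<Rightarrow> complex" where
  "mono_pair x = foldr dual_act x mono_counit"

lemma mono_pair_Nil: "mono_pair [] = mono_counit" by (simp add: mono_pair_def)

lemma mono_pair_Cons: "mono_pair (g # x) = dual_act g (mono_pair x)" by (simp add: mono_pair_def)

lemma mono_pair_append: "mono_pair (x @ y) = foldr dual_act x (mono_pair y)" by (simp add: mono_pair_def)

definition pairing :: "genA list \<Rightarrow> genU list \<Rightarrow> complex" where
  "pairing a x = normal_factor q a * mono_pair x (count_list a GX) (count_list a GT) (count_list a GY)"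

definition box_supp :: "(nat \<Rightarrow> nat \<Rightarrow> nat \<Rightarrow> complex) \<Rightarrow> bool" where
  "box_supp f \<longleftrightarrow> (\<forall>i j k. \<not> (i < n \<and> k < n) \<longrightarrow> f i j k = 0)"

lemma box_supp_dual_act: "box_supp (dual_act g f)" by (simp add: box_supp_def dual_act_def)

lemma box_supp_mono_counit: "box_supp mono_counit" using n_gt_1 by (auto simp: box_supp_def mono_counit_def)

lemma box_supp_mono_pair: "box_supp (mono_pair x)" by (cases x) (auto simp: mono_pair_Nil mono_pair_Cons box_supp_dual_act box_supp_mono_counit)

lemma mono_pair_outside_box: "\<not> (i < n \<and> k < n) \<Longrightarrow> mono_pair x i j k = 0"
  using box_supp_mono_pair[of x] by (simp add: box_supp_def)

lemma mono_pair_Cons_GF: "mono_pair (GF # x) i j k = qint (inverse q) i * mono_pair x (i - 1) j k"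
proof (cases "i < n \<and> k < n")
  case True
  then show ?thesis by (cases i) (simp_all add: mono_pair_Cons dual_act_F qint_0)
next
  case outside: False
  have "qint (inverse q) i * mono_pair x (i - 1) j k = 0"
  proof (cases "i = n")
    case True then show ?thesis by (simp add: qint_inv_n_eq_0)
  next
    case False
    with outside have "\<not> (i - 1 < n \<and> k < n)" by auto
    then show ?thesis by (simp add: mono_pair_outside_box)
  qed
  then show ?thesis using outside by (simp add: mono_pair_Cons dual_act_F)
qed

lemma mono_pair_Cons_GK: "mono_pair (GK # x) i j k = q ^ (i + j) * mono_pair x i j k"
  by (cases "i < n \<and> k < n") (auto simp: mono_pair_Cons dual_act_K mono_pair_outside_box)

lemma mono_pair_Cons_GE:
  "mono_pair (GE # x) i j k
     = qint q k * mono_pair x i (Suc j) (k - 1) + (q ^ (i + j) - inverse q ^ j) * mono_pair x (Suc i) j k"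
proof (cases "i < n \<and> k < n")
  case True
  have "mono_pair x (Suc i) j k = 0" if "\<not> Suc i < n" using that by (simp add: mono_pair_outside_box)
  then show ?thesis using True by (cases k) (auto simp: mono_pair_Cons dual_act_E qint_0)
next
  case outside: False
  have "qint q k * mono_pair x i (Suc j) (k - 1) = 0"
  proof (cases "k = n")
    case True then show ?thesis by (simp add: qint_n_eq_0)
  next
    case False
    with outside have "\<not> (i < n \<and> k - 1 < n)" by auto
    then show ?thesis by (simp add: mono_pair_outside_box)
  qed
  moreover have "mono_pair x (Suc i) j k = 0" using outside by (auto intro!: mono_pair_outside_box)
  ultimately show ?thesis using outside by (simp add: mono_pair_Cons dual_act_E qint_0)
qed

lemma dual_act_sum:
  "dual_act g (\<lambda>i j k. \<Sum>l\<in>L. c l * F l i j k) i j k = (\<Sum>l\<in>L. c l * dual_act g (F l) i j k)"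
proof (cases g)
  case GF then show ?thesis by (cases "i < n \<and> k < n \<and> 0 < i") (auto simp: dual_act_F sum_distrib_left mult.left_commute)
next
  case GK then show ?thesis by (cases "i < n \<and> k < n") (auto simp: dual_act_K sum_distrib_left mult.left_commute)
next
  case GE then show ?thesis
    by (cases "i < n \<and> k < n"; cases "0 < k"; cases "Suc i < n")
       (auto simp: dual_act_E sum_distrib_left mult.left_commute distrib_left sum.distrib)
qed

lemma foldr_dual_act_sum:
  "foldr dual_act u (\<lambda>i j k. \<Sum>l\<in>L. c l * F l i j k) = (\<lambda>i j k. \<Sum>l\<in>L. c l * foldr dual_act u (F l) i j k)"
proof (induction u)
  case Nil then show ?case by simp
next
  case (Cons g u)
  show ?case by (simp add: Cons dual_act_sum[of g "\<lambda>l. c l" "\<lambda>l. foldr dual_act u (F l)" L, symmetric])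
qed

lemma dual_act_zero: "dual_act g (\<lambda>i j k. 0) = (\<lambda>i j k. 0)"
  by (auto simp: dual_act_def fun_eq_iff split: genU.split)

lemma foldr_dual_act_zero: "foldr dual_act u (\<lambda>i j k. 0) = (\<lambda>i j k. 0)"
  by (induction u) (auto simp: dual_act_zero)

lemma dual_act_scale: "dual_act g (\<lambda>i j k. c * f i j k) = (\<lambda>i j k. c * dual_act g f i j k)"
proof (intro ext)
  fix i j k
  show "dual_act g (\<lambda>i j k. c * f i j k) i j k = c * dual_act g f i j k"
    using dual_act_sum[of g "\<lambda>_. c" "\<lambda>_. f" "{()}" i j k] by simp
qed

lemma dual_act_add: "dual_act g (\<lambda>i j k. f i j k + h i j k) = (\<lambda>i j k. dual_act g f i j k + dual_act g h i j k)"
proof (intro ext)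
  fix i j k
  show "dual_act g (\<lambda>i j k. f i j k + h i j k) i j k = dual_act g f i j k + dual_act g h i j k"
    using dual_act_sum[of g "\<lambda>_. 1" "\<lambda>l. if l then f else h" "{True, False}" i j k] by simp
qed

lemma dual_act_diff: "dual_act g (\<lambda>i j k. f i j k - h i j k) = (\<lambda>i j k. dual_act g f i j k - dual_act g h i j k)"
proof (intro ext)
  fix i j k
  show "dual_act g (\<lambda>i j k. f i j k - h i j k) i j k = dual_act g f i j k - dual_act g h i j k"
    using dual_act_sum[of g "\<lambda>l. if l then 1 else -1" "\<lambda>l. if l then f else h" "{True, False}" i j k] by simp
qed

lemma dual_act_E_K_comm: "dual_act GE (dual_act GK f) = (\<lambda>i j k. q * dual_act GK (dual_act GE f) i j k)"
proof (intro ext)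
  fix i j k
  show "dual_act GE (dual_act GK f) i j k = q * dual_act GK (dual_act GE f) i j k"
    by (cases "i < n \<and> k < n"; cases "0 < k"; cases "Suc i < n")
       (auto simp: dual_act_E dual_act_K algebra_simps power_add)
qed

lemma dual_act_K_F_comm: "dual_act GK (dual_act GF f) = (\<lambda>i j k. q * dual_act GF (dual_act GK f) i j k)"
proof (intro ext)
  fix i j k
  show "dual_act GK (dual_act GF f) i j k = q * dual_act GF (dual_act GK f) i j k"
  proof (cases i)
    case 0 then show ?thesis by (simp add: dual_act_F dual_act_K)
  next
    case (Suc i')
    then show ?thesis by (cases "i < n \<and> k < n") (auto simp: dual_act_F dual_act_K algebra_simps)
  qed
qed

definition dual_act_Kinv :: "(nat \<Rightarrow> nat \<Rightarrow> nat \<Rightarrow> complex) \<Rightarrow> nat \<Rightarrow> nat \<Rightarrow> nat \<Rightarrow> complex" where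
  "dual_act_Kinv f i j k = (if i < n \<and> k < n then inverse q ^ (i + j) * f i j k else 0)"

lemma dual_act_E_Kinv_comm: "dual_act GE (dual_act_Kinv f) = (\<lambda>i j k. inverse q * dual_act_Kinv (dual_act GE f) i j k)"
proof (intro ext)
  fix i j k
  show "dual_act GE (dual_act_Kinv f) i j k = inverse q * dual_act_Kinv (dual_act GE f) i j k"
    by (cases "i < n \<and> k < n"; cases "0 < k"; cases "Suc i < n")
       (auto simp: dual_act_E dual_act_Kinv_def algebra_simps power_add)
qed

lemma dual_act_E_F_coeff:
  assumes "i < n"
  shows "(if Suc i < n then (q ^ (i + j) - inverse q ^ j) * qint (inverse q) (Suc i) else 0)
       - (if 0 < i then qint (inverse q) i * (q ^ (i - 1 + j) - inverse q ^ j) else 0)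
       = q ^ (i + j) - inverse q ^ (i + j)"
proof (cases i)
  case 0
  then show ?thesis using n_gt_1 qint_1[OF inv_q_neq_1] by simp
next
  case (Suc i')
  have "qint (inverse q) (Suc i) = 0" if "\<not> Suc i < n"
    using that assms qint_inv_n_eq_0 by (metis Suc_lessI)
  then show ?thesis
    using Suc qint_inverse_commutator[OF q_nonzero q_neq_1, of i' j] by auto
qed

lemma dual_act_E_F_comm:
  "dual_act GE (dual_act GF f)
     = (\<lambda>i j k. dual_act GF (dual_act GE f) i j k + dual_act GK f i j k - dual_act_Kinv f i j k)"
proof (intro ext)
  fix i j k
  show "dual_act GE (dual_act GF f) i j k
      = dual_act GF (dual_act GE f) i j k + dual_act GK f i j k - dual_act_Kinv f i j k"
  proof (cases "i < n \<and> k < n")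
    case False
    then show ?thesis by (auto simp: dual_act_E dual_act_F dual_act_K dual_act_Kinv_def)
  next
    case True
    have "dual_act GE (dual_act GF f) i j k - dual_act GF (dual_act GE f) i j k
        = ((if Suc i < n then (q ^ (i + j) - inverse q ^ j) * qint (inverse q) (Suc i) else 0)
         - (if 0 < i then qint (inverse q) i * (q ^ (i - 1 + j) - inverse q ^ j) else 0)) * f i j k"
      using True by (cases i) (auto simp: dual_act_E dual_act_F algebra_simps)
    also have "\<dots> = (q ^ (i + j) - inverse q ^ (i + j)) * f i j k"
      using True by (simp only: dual_act_E_F_coeff)
    finally show ?thesis
      using True by (simp add: dual_act_K dual_act_Kinv_def algebra_simps)
  qed
qed

lemma foldr_dual_act_K_pow: "box_supp f \<Longrightarrow> foldr dual_act (replicate s GK) f i j k = q ^ (s * (i + j)) * f i j k"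
proof (induction s)
  case 0 then show ?case by simp
next
  case (Suc s)
  show ?case
  proof (cases "i < n \<and> k < n")
    case True
    then show ?thesis using Suc.IH[OF Suc.prems] by (simp add: dual_act_K power_add mult.assoc)
  next
    case False
    then have "f i j k = 0" using Suc.prems by (simp add: box_supp_def)
    then show ?thesis using False by (auto simp: dual_act_K)
  qed
qed

lemma foldr_dual_act_K_n: "box_supp f \<Longrightarrow> foldr dual_act (replicate n GK) f = f"
proof (intro ext)
  fix i j k assume "box_supp f"
  have "q ^ (n * (i + j)) = 1" by (simp add: power_mult q_pow_n)
  then show "foldr dual_act (replicate n GK) f i j k = f i j k" using foldr_dual_act_K_pow[OF \<open>box_supp f\<close>] by simp
qed

lemma foldr_dual_act_K_pred_n: "box_supp f \<Longrightarrow> foldr dual_act (replicate (n - 1) GK) f = dual_act_Kinv f"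
proof (intro ext)
  fix i j k assume Z: "box_supp f"
  have "q ^ ((n - 1) * (i + j)) * q ^ (i + j) = 1"
  proof -
    have "(n - 1) * (i + j) + (i + j) = n * (i + j)" using n_gt_1 by (cases n) auto
    then have "q ^ ((n - 1) * (i + j)) * q ^ (i + j) = q ^ (n * (i + j))" by (simp only: power_add[symmetric])
    also have "\<dots> = 1" by (simp add: power_mult q_pow_n)
    finally show ?thesis .
  qed
  then have "q ^ ((n - 1) * (i + j)) = inverse (q ^ (i + j))"
    using q_nonzero by (simp add: field_simps)
  then have "q ^ ((n - 1) * (i + j)) = inverse q ^ (i + j)"
    by (simp add: power_inverse)
  then show "foldr dual_act (replicate (n - 1) GK) f i j k = dual_act_Kinv f i j k"
    using foldr_dual_act_K_pow[OF Z] Z by (auto simp: dual_act_Kinv_def box_supp_def)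
qed

lemma foldr_dual_act_F_pow: "i < s \<Longrightarrow> foldr dual_act (replicate s GF) f i j k = 0"
proof (induction s arbitrary: i)
  case 0 then show ?case by simp
next
  case (Suc s)
  show ?case
  proof (cases i)
    case 0 then show ?thesis by (simp add: dual_act_F)
  next
    case (Suc i') then show ?thesis using Suc.IH[of i'] \<open>i < Suc s\<close> by (simp add: dual_act_F)
  qed
qed

lemma foldr_dual_act_F_n: "foldr dual_act (replicate n GF) f = (\<lambda>i j k. 0)"
proof (intro ext)
  fix i j k
  show "foldr dual_act (replicate n GF) f i j k = 0"
  proof (cases "i < n")
    case True then show ?thesis by (rule foldr_dual_act_F_pow)
  next
    case False
    have "replicate n GF = GF # replicate (n - 1) GF" using n_gt_1 by (cases n) auto
    then show ?thesis using False by (simp add: dual_act_F)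
  qed
qed

lemma funpow_dual_act_E_mono_counit: "(dual_act GE ^^ s) mono_counit i j k = (if i = 0 \<and> k = s \<and> s < n then qfact q s else 0)"
proof (induction s arbitrary: i j k)
  case 0 then show ?case using n_gt_1 by (simp add: mono_counit_def qfact_def)
next
  case (Suc s)
  have "(dual_act GE ^^ Suc s) mono_counit i j k = dual_act GE ((dual_act GE ^^ s) mono_counit) i j k" by simp
  also have "\<dots> = (if i < n \<and> k < n \<and> 0 < k then qint q k * (if i = 0 \<and> k - 1 = s \<and> s < n then qfact q s else 0) else 0)"
    by (simp add: dual_act_E Suc.IH)
  also have "\<dots> = (if i = 0 \<and> k = Suc s \<and> Suc s < n then qfact q (Suc s) else 0)"
    by (auto simp: qfact_Suc mult.commute)
  finally show ?case .
qed

lemma funpow_dual_act_E_K: "(dual_act GE ^^ m) (dual_act GK f) = (\<lambda>i j k. q ^ m * dual_act GK ((dual_act GE ^^ m) f) i j k)"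
proof (induction m)
  case 0 then show ?case by simp
next
  case (Suc m)
  have "(dual_act GE ^^ Suc m) (dual_act GK f) = dual_act GE (\<lambda>i j k. q ^ m * dual_act GK ((dual_act GE ^^ m) f) i j k)"
    using Suc by simp
  also have "\<dots> = (\<lambda>i j k. q ^ m * dual_act GE (dual_act GK ((dual_act GE ^^ m) f)) i j k)"
    by (rule dual_act_scale)
  also have "\<dots> = (\<lambda>i j k. q ^ Suc m * dual_act GK ((dual_act GE ^^ Suc m) f) i j k)"
    by (simp add: dual_act_E_K_comm algebra_simps)
  finally show ?case .
qed

lemma funpow_dual_act_E_F: "(dual_act GE ^^ Suc m) (dual_act GF f) = (\<lambda>i j k. dual_act GF ((dual_act GE ^^ Suc m) f) i j k
      + qint q (Suc m) * dual_act GK ((dual_act GE ^^ m) f) i j k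
      - qint (inverse q) (Suc m) * dual_act_Kinv ((dual_act GE ^^ m) f) i j k)"
proof (induction m)
  case 0
  have "qint q (Suc 0) = 1" "qint (inverse q) (Suc 0) = 1" using qint_1[OF q_neq_1] qint_1[OF inv_q_neq_1] by auto
  then show ?case by (simp add: dual_act_E_F_comm)
next
  case (Suc m)
  let ?A = "dual_act GF ((dual_act GE ^^ Suc m) f)"
  let ?B = "dual_act GK ((dual_act GE ^^ m) f)"
  let ?C = "dual_act_Kinv ((dual_act GE ^^ m) f)"
  have "(dual_act GE ^^ Suc (Suc m)) (dual_act GF f) = dual_act GE ((dual_act GE ^^ Suc m) (dual_act GF f))" by simp
  also have "\<dots> = dual_act GE (\<lambda>i j k. ?A i j k + qint q (Suc m) * ?B i j k - qint (inverse q) (Suc m) * ?C i j k)"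
    by (simp only: Suc)
  also have "\<dots> = (\<lambda>i j k. dual_act GE ?A i j k + qint q (Suc m) * dual_act GE ?B i j k - qint (inverse q) (Suc m) * dual_act GE ?C i j k)"
    by (simp only: dual_act_diff dual_act_add dual_act_scale)
  also have "\<dots> = (\<lambda>i j k. dual_act GF ((dual_act GE ^^ Suc (Suc m)) f) i j k
      + qint q (Suc (Suc m)) * dual_act GK ((dual_act GE ^^ Suc m) f) i j k
      - qint (inverse q) (Suc (Suc m)) * dual_act_Kinv ((dual_act GE ^^ Suc m) f) i j k)"
  proof (intro ext)
    fix i j k
    have a: "dual_act GE ?A i j k = dual_act GF ((dual_act GE ^^ Suc (Suc m)) f) i j k + dual_act GK ((dual_act GE ^^ Suc m) f) i j k - dual_act_Kinv ((dual_act GE ^^ Suc m) f) i j k"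
      by (simp add: dual_act_E_F_comm)
    have b: "dual_act GE ?B i j k = q * dual_act GK ((dual_act GE ^^ Suc m) f) i j k"
      by (simp add: dual_act_E_K_comm)
    have c: "dual_act GE ?C i j k = inverse q * dual_act_Kinv ((dual_act GE ^^ Suc m) f) i j k"
      by (simp add: dual_act_E_Kinv_comm)
    show "dual_act GE ?A i j k + qint q (Suc m) * dual_act GE ?B i j k - qint (inverse q) (Suc m) * dual_act GE ?C i j k =
      dual_act GF ((dual_act GE ^^ Suc (Suc m)) f) i j k
      + qint q (Suc (Suc m)) * dual_act GK ((dual_act GE ^^ Suc m) f) i j k
      - qint (inverse q) (Suc (Suc m)) * dual_act_Kinv ((dual_act GE ^^ Suc m) f) i j k"
      unfolding a b c qint_Suc[OF q_neq_1, of "Suc m"] qint_Suc[OF inv_q_neq_1, of "Suc m"]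
      by (simp add: algebra_simps)
  qed
  finally show ?case .
qed

lemma funpow_dual_act_E_n_F: "(dual_act GE ^^ n) (dual_act GF f) = dual_act GF ((dual_act GE ^^ n) f)"
proof -
  obtain m where m: "n = Suc m" using n_gt_1 by (cases n) auto
  have "qint q (Suc m) = 0" "qint (inverse q) (Suc m) = 0" using qint_n_eq_0 qint_inv_n_eq_0 m by auto
  then show ?thesis using funpow_dual_act_E_F[of m f] m by simp
qed

lemma funpow_dual_act_E_n_K: "(dual_act GE ^^ n) (dual_act GK f) = dual_act GK ((dual_act GE ^^ n) f)"
  using funpow_dual_act_E_K[of n f] q_pow_n by simp

lemma funpow_dual_act_E_n_E: "(dual_act GE ^^ n) (dual_act GE f) = dual_act GE ((dual_act GE ^^ n) f)"
  by (simp add: funpow_swap1)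

lemma funpow_dual_act_E_n_mono_pair: "(dual_act GE ^^ n) (mono_pair v) = (\<lambda>i j k. 0)"
proof (induction v)
  case Nil
  show ?case by (auto simp: mono_pair_Nil funpow_dual_act_E_mono_counit)
next
  case (Cons g v)
  have "(dual_act GE ^^ n) (dual_act g (mono_pair v)) = dual_act g ((dual_act GE ^^ n) (mono_pair v))"
    by (cases g) (simp_all add: funpow_dual_act_E_n_F funpow_dual_act_E_n_K funpow_dual_act_E_n_E)
  then show ?case by (simp add: mono_pair_Cons Cons dual_act_zero)
qed

lemma foldr_dual_act_scale: "foldr dual_act u (\<lambda>i j k. c * f i j k) = (\<lambda>i j k. c * foldr dual_act u f i j k)"
  using foldr_dual_act_sum[of u "\<lambda>_. c" "\<lambda>_. f" "{()}"] by simp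

lemma foldr_dual_act_add: "foldr dual_act u (\<lambda>i j k. f i j k + h i j k) = (\<lambda>i j k. foldr dual_act u f i j k + foldr dual_act u h i j k)"
  using foldr_dual_act_sum[of u "\<lambda>_. 1" "\<lambda>l. if l then f else h" "{True, False}"] by simp

lemma foldr_dual_act_diff: "foldr dual_act u (\<lambda>i j k. f i j k - h i j k) = (\<lambda>i j k. foldr dual_act u f i j k - foldr dual_act u h i j k)"
  using foldr_dual_act_sum[of u "\<lambda>l. if l then 1 else -1" "\<lambda>l. if l then f else h" "{True, False}"] by simp

lemma mono_pair_relsU:
  assumes "r \<in> relsU q n"
  shows "lin_ext r (\<lambda>w. mono_pair (u @ w @ v) i j k) = 0"
proof -
  let ?L = "mono_pair v"
  have Z: "box_supp ?L" by (rule box_supp_mono_pair)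
  have LA: "mono_pair (u @ w @ v) = foldr dual_act u (foldr dual_act w ?L)" for w by (simp add: mono_pair_append)
  from assms show ?thesis unfolding relsU_def
  proof (elim insertE)
    assume r: "r = fa_word (replicate n GE)"
    have "foldr dual_act (replicate n GE) ?L = (\<lambda>i j k. 0)" using funpow_dual_act_E_n_mono_pair by simp
    then show ?thesis by (simp add: r lin_ext_word LA foldr_dual_act_zero)
  next
    assume r: "r = fa_word (replicate n GF)"
    have "(dual_act GF ^^ n) ?L = (\<lambda>i j k. 0)" using foldr_dual_act_F_n[of ?L] by simp
    then show ?thesis by (simp add: r lin_ext_word LA foldr_dual_act_zero)
  next
    assume r: "r = (\<lambda>w. fa_word (replicate n GK) w - fa_word [] w)"
    have "(dual_act GK ^^ n) ?L = ?L" using foldr_dual_act_K_n[OF Z] by simp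
    then show ?thesis by (simp add: r lin_ext_word_diff LA)
  next
    assume r: "r = (\<lambda>w. fa_word [GK, GE] w - inverse q * fa_word [GE, GK] w)"
    have "foldr dual_act [GE, GK] ?L = (\<lambda>i j k. q * foldr dual_act [GK, GE] ?L i j k)" by (simp add: dual_act_E_K_comm)
    then show ?thesis using q_nonzero by (simp add: r lin_ext_word_diff_scaled LA foldr_dual_act_scale)
  next
    assume r: "r = (\<lambda>w. fa_word [GK, GF] w - q * fa_word [GF, GK] w)"
    have "foldr dual_act [GK, GF] ?L = (\<lambda>i j k. q * foldr dual_act [GF, GK] ?L i j k)" by (simp add: dual_act_K_F_comm)
    then show ?thesis by (simp add: r lin_ext_word_diff_scaled LA foldr_dual_act_scale)
  next
    assume r: "r = (\<lambda>w. fa_word [GE, GF] w - fa_word [GF, GE] w - fa_word [GK] w + fa_word (replicate (n - 1) GK) w)"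
    have e1: "dual_act GE (dual_act GF ?L) = (\<lambda>i j k. dual_act GF (dual_act GE ?L) i j k + dual_act GK ?L i j k - dual_act_Kinv ?L i j k)"
      by (rule dual_act_E_F_comm)
    have e2: "(dual_act GK ^^ (n - Suc 0)) ?L = dual_act_Kinv ?L" using foldr_dual_act_K_pred_n[OF Z] by simp
    show ?thesis by (simp add: r lin_ext_word_comb4 LA e1 e2 foldr_dual_act_add foldr_dual_act_diff)
  qed simp
qed

lemma pairing_relsU:
  assumes "r \<in> relsU q n"
  shows "pairR pairing a (fa_mult (fa_mult (fa_word u) r) (fa_word v)) = 0"
proof -
  have "pairR pairing a (fa_mult (fa_mult (fa_word u) r) (fa_word v)) = lin_ext r (\<lambda>w. pairing a (u @ w @ v))"
    by (simp add: pairR_lin_ext lin_ext_sandwich)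
  also have "\<dots> = normal_factor q a * lin_ext r (\<lambda>w. mono_pair (u @ w @ v) (count_list a GX) (count_list a GT) (count_list a GY))"
    by (simp add: pairing_def lin_ext_scale)
  also have "\<dots> = 0"
    using mono_pair_relsU[OF assms] by simp
  finally show ?thesis .
qed

lemma mono_pair_F_pow: "i < n \<Longrightarrow> k < n \<Longrightarrow> mono_pair (replicate s GF @ x) i j k
   = (if s \<le> i then (\<Prod>m<s. qint (inverse q) (i - m)) * mono_pair x (i - s) j k else 0)"
proof (induction s arbitrary: i)
  case 0 then show ?case by simp
next
  case (Suc s)
  show ?case
  proof (cases i)
    case 0 then show ?thesis by (simp add: mono_pair_Cons dual_act_F)
  next
    case (Suc i')
    have "mono_pair (replicate (Suc s) GF @ x) i j k = qint (inverse q) i * mono_pair (replicate s GF @ x) i' j k"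
      using Suc \<open>i < n\<close> \<open>k < n\<close> by (simp add: mono_pair_Cons dual_act_F)
    also have "\<dots> = qint (inverse q) i * (if s \<le> i' then (\<Prod>m<s. qint (inverse q) (i' - m)) * mono_pair x (i' - s) j k else 0)"
      using Suc.IH[of i'] Suc \<open>i < n\<close> \<open>k < n\<close> by simp
    also have "\<dots> = (if Suc s \<le> i then (\<Prod>m<Suc s. qint (inverse q) (i - m)) * mono_pair x (i - Suc s) j k else 0)"
    proof -
      have "(\<Prod>m<Suc s. qint (inverse q) (i - m)) = qint (inverse q) i * (\<Prod>m<s. qint (inverse q) (i' - m))"
        using prod.lessThan_Suc_shift[of "\<lambda>m. qint (inverse q) (i - m)" s] Suc by simp
      then show ?thesis using Suc by (simp add: mult.assoc)
    qed
    finally show ?thesis .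
  qed
qed

lemma mono_pair_K_pow: "mono_pair (replicate s GK @ x) i j k = q ^ (s * (i + j)) * mono_pair x i j k"
  using foldr_dual_act_K_pow[OF box_supp_mono_pair, of s x i j k] by (simp add: mono_pair_append)

lemma mono_pair_E_pow: "mono_pair (replicate s GE) i j k = (if i = 0 \<and> k = s \<and> s < n then qfact q s else 0)"
  using funpow_dual_act_E_mono_counit[of s i j k] by (simp add: mono_pair_def)

lemma mono_pair_monoU:
  assumes "i < n" "k < n"
  shows "mono_pair (monoU i' j' k') i j k = (if i = i' \<and> k = k' then q ^ (j * j') * qfact (inverse q) i * qfact q k else 0)"
proof -
  have "mono_pair (monoU i' j' k') i j k = (if i' \<le> i then (\<Prod>m<i'. qint (inverse q) (i - m)) *
      (q ^ (j' * (i - i' + j)) * (if i - i' = 0 \<and> k = k' \<and> k' < n then qfact q k' else 0)) else 0)"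
    unfolding monoU_def using assms by (simp add: mono_pair_F_pow mono_pair_K_pow mono_pair_E_pow)
  also have "\<dots> = (if i = i' \<and> k = k' then q ^ (j * j') * qfact (inverse q) i * qfact q k else 0)"
    using assms by (auto simp: qfact_prod mult.commute)
  finally show ?thesis .
qed

lemma pairing_mono:
  assumes "i < n" "k < n"
  shows "pairing (monoA i j k) (monoU i' j' k') = (if i = i' \<and> k = k' then q ^ (j * j') * qfact (inverse q) i * qfact q k else 0)"
  using assms by (simp add: pairing_def normal_factor_monoA mono_pair_monoU)

lemma mono_pair_0_0_0: "mono_pair x 0 0 0 = counitU x"
proof (induction x)
  case Nil then show ?case by (simp add: mono_pair_Nil mono_counit_def counitU_def counitW_def)
next
  case (Cons g x)
  show ?case
    using Cons n_gt_1 by (cases g) (simp_all add: mono_pair_Cons dual_act_def counitU_def counitW_def)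
qed

lemma pairing_Nil_left: "pairing [] x = counitU x"
  using n_gt_1 by (simp add: pairing_def mono_pair_0_0_0)

lemma pairing_Nil_right: "pairing a [] = counitA a"
  using n_gt_1 by (auto simp: pairing_def mono_pair_Nil mono_counit_def counitA_def counitA_gen_eq_count normal_factor_T_only)

lemma pairing_gens: "pairing [GX] [GF] = 1" "pairing [GT] [GK] = q" "pairing [GY] [GE] = 1"
  using n_gt_1 qint_1[OF inv_q_neq_1] qint_1[OF q_neq_1] by (simp_all add: pairing_def mono_pair_Cons mono_pair_Nil dual_act_def mono_counit_def)

lemma mono_pair_period: "mono_pair x i (j + n) k = mono_pair x i j k"
proof (induction x arbitrary: i j k)
  case Nil then show ?case by (simp add: mono_pair_Nil mono_counit_def)
next
  case (Cons g x)
  have p1: "q ^ (i + (j + n)) = q ^ (i + j)" by (simp add: power_add q_pow_n)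
  have p2: "inverse q ^ (j + n) = inverse q ^ j" by (simp add: power_add inv_q_pow_n)
  have IH2: "mono_pair x i' (Suc (j + n)) k' = mono_pair x i' (Suc j) k'" for i' k'
    using Cons.IH[of i' "Suc j" k'] by simp
  show ?case by (cases g) (simp_all add: mono_pair_Cons dual_act_def Cons.IH p1 p2 IH2)
qed

lemma pairing_reorder:
  assumes c: "count_list s GX = count_list s' GX" "count_list s GT = count_list s' GT" "count_list s GY = count_list s' GY"
    and w: "normal_factor q (s @ v) = c * normal_factor q (s' @ v)"
  shows "pairing (u @ s @ v) x = c * pairing (u @ s' @ v) x"
proof -
  have c1: "count_list (s @ v) g = count_list (s' @ v) g" if "g \<in> {GX, GT, GY}" for g
    using c that by auto
  have ww: "normal_factor q (u @ (s @ v)) = c * normal_factor q (u @ (s' @ v))"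
    unfolding normal_factor_append[of q u "s @ v"] normal_factor_append[of q u "s' @ v"] w
    using c1 by (simp add: mult_ac)
  show ?thesis using c ww by (simp add: pairing_def)
qed

lemma pairing_T_pow_n_infix: "pairing (u @ replicate n GT @ v) x = pairing (u @ v) x"
proof -
  have "normal_factor q (replicate n GT @ v) = normal_factor q v"
    using normal_factor_append[of q "replicate n GT" v] normal_factor_T_only[of "replicate n GT" q]
    by (simp add: power_mult inv_q_pow_n)
  moreover have "q ^ (m * (n + p)) = q ^ (m * p)" for m p
  proof -
    have "q ^ (m * (n + p)) = (q ^ n) ^ m * q ^ (m * p)"
      by (simp add: algebra_simps power_add power_mult[symmetric])
    then show ?thesis by (simp add: q_pow_n)
  qed
  ultimately have "normal_factor q (u @ replicate n GT @ v) = normal_factor q (u @ v)"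
    using normal_factor_append[of q u "replicate n GT @ v"] normal_factor_append[of q u v] by simp
  then show ?thesis
    using mono_pair_period[of x "count_list u GX + count_list v GX" "count_list u GT + count_list v GT"]
    by (simp add: pairing_def algebra_simps)
qed

lemma pairing_relsA:
  assumes "r \<in> relsA q n"
  shows "pairL pairing (fa_mult (fa_mult (fa_word u) r) (fa_word v)) x = 0"
proof -
  have e: "pairL pairing (fa_mult (fa_mult (fa_word u) r) (fa_word v)) x = lin_ext r (\<lambda>w. pairing (u @ w @ v) x)"
    by (simp add: pairL_lin_ext lin_ext_sandwich)
  have "lin_ext r (\<lambda>w. pairing (u @ w @ v) x) = 0"
  using assms unfolding relsA_def
  proof (elim insertE)
    assume r: "r = fa_word (replicate n GX)"
    show ?thesis by (simp add: r lin_ext_word pairing_def mono_pair_outside_box)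
  next
    assume r: "r = fa_word (replicate n GY)"
    show ?thesis by (simp add: r lin_ext_word pairing_def mono_pair_outside_box)
  next
    assume r: "r = (\<lambda>w. fa_word (replicate n GT) w - fa_word [] w)"
    have "pairing (u @ replicate n GT @ v) x = pairing (u @ v) x" by (rule pairing_T_pow_n_infix)
    then show ?thesis by (simp add: r lin_ext_word_diff)
  next
    assume r: "r = (\<lambda>w. fa_word [GY, GX] w - fa_word [GX, GY] w)"
    have "pairing (u @ [GY, GX] @ v) x = 1 * pairing (u @ [GX, GY] @ v) x"
      by (rule pairing_reorder) auto
    then show ?thesis by (simp add: r lin_ext_word_diff)
  next
    assume r: "r = (\<lambda>w. fa_word [GX, GT] w - q * fa_word [GT, GX] w)"
    have "pairing (u @ [GX, GT] @ v) x = q * pairing (u @ [GT, GX] @ v) x"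
      by (rule pairing_reorder) (use q_nonzero in auto)
    then show ?thesis by (simp add: r lin_ext_word_diff_scaled)
  next
    assume r: "r = (\<lambda>w. fa_word [GY, GT] w - q * fa_word [GT, GY] w)"
    have "pairing (u @ [GY, GT] @ v) x = q * pairing (u @ [GT, GY] @ v) x"
      by (rule pairing_reorder) auto
    then show ?thesis by (simp add: r lin_ext_word_diff_scaled)
  qed simp
  then show ?thesis using e by simp
qed

lemma q_pow_ratio_neq_1:
  assumes "j < n" "j' < n" "j \<noteq> j'"
  shows "q ^ j' * inverse q ^ j \<noteq> 1"
proof
  assume r: "q ^ j' * inverse q ^ j = 1"
  show False
  proof (cases "j < j'")
    case True
    then have "q ^ j' * inverse q ^ j = q ^ (j' - j)"
      using q_nonzero by (simp add: power_diff power_inverse field_simps)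
    then show False using r q_pow_neq_1[of "j' - j"] True assms by auto
  next
    case False
    then have "j' < j" using assms by auto
    moreover from this have "q ^ j' * inverse q ^ j = inverse (q ^ (j - j'))"
      using q_nonzero by (simp add: power_diff power_inverse field_simps)
    ultimately show False using r q_pow_neq_1[of "j - j'"] assms by (auto simp: inverse_eq_iff_eq)
  qed
qed

lemma sum_q_pow_ratio:
  assumes "j < n" "j' < n"
  shows "(\<Sum>l<n. (q ^ j' * inverse q ^ j) ^ l) = (if j = j' then of_nat n else 0)"
proof (cases "j = j'")
  case True
  then show ?thesis using q_nonzero by (simp add: power_inverse)
next
  case False
  have "(q ^ j' * inverse q ^ j) ^ n = 1"
    by (simp add: power_mult_distrib power_mult[symmetric] mult.commute[of _ n] power_mult q_pow_n inv_q_pow_n)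
  then show ?thesis
    using False q_pow_ratio_neq_1[OF assms False] by (simp add: sum_gp_strict)
qed

lemma pairing_dual_elt_monoU:
  assumes "i < n" "j < n" "k < n" "i' < n" "j' < n" "k' < n"
  shows "pairL pairing (dual_elt q n i j k) (monoU i' j' k') = (if i = i' \<and> j = j' \<and> k = k' then 1 else 0)"
proof -
  define C where "C = 1 / (qfact (inverse q) i * qfact q k) * (1 / of_nat n)"
  have e: "dual_elt q n i j k = (\<lambda>w. \<Sum>l<n. (C * inverse q ^ (j * l)) * fa_word (monoA i l k) w)"
    unfolding dual_elt_def C_def by (simp add: sum_distrib_left mult.assoc)
  have pw: "inverse q ^ (j * l) * q ^ (l * j') = (q ^ j' * inverse q ^ j) ^ l" for l
    unfolding power_mult_distrib power_mult[symmetric] by (simp add: mult.commute)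
  have "pairL pairing (dual_elt q n i j k) (monoU i' j' k')
      = (\<Sum>l<n. (C * inverse q ^ (j * l)) * pairing (monoA i l k) (monoU i' j' k'))"
    unfolding pairL_lin_ext e by (subst lin_ext_word_comb) auto
  also have "\<dots> = (\<Sum>l<n. if i = i' \<and> k = k'
      then C * qfact (inverse q) i * qfact q k * (q ^ j' * inverse q ^ j) ^ l else 0)"
    by (rule sum.cong[OF refl]) (use assms pw[symmetric] in \<open>simp add: pairing_mono mult_ac\<close>)
  also have "\<dots> = (if i = i' \<and> k = k'
      then C * qfact (inverse q) i * qfact q k * (\<Sum>l<n. (q ^ j' * inverse q ^ j) ^ l) else 0)"
    by (auto simp: sum_distrib_left)
  also have "\<dots> = (if i = i' \<and> j = j' \<and> k = k' then 1 else 0)"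
  proof -
    have "qfact (inverse q) i \<noteq> 0" "qfact q k \<noteq> 0"
      using assms qint_nonzero qint_inv_nonzero by (auto simp: qfact_def)
    then have "C * qfact (inverse q) i * qfact q k * of_nat n = 1"
      using n_gt_1 by (simp add: C_def)
    then show ?thesis
      using assms by (auto simp: sum_q_pow_ratio)
  qed
  finally show ?thesis .
qed

section \<open>Compatibility with the coproducts\<close>

lemma q_pow_pred_n: "q ^ ((n - 1) * m) = inverse q ^ m"
proof -
  have "(n - 1) * m + m = n * m" using n_gt_1 by (cases n) auto
  then have "q ^ ((n - 1) * m) * q ^ m = q ^ (n * m)" by (simp only: power_add[symmetric])
  also have "\<dots> = 1" by (simp add: power_mult q_pow_n)
  finally have "q ^ ((n - 1) * m) = inverse (q ^ m)" using q_nonzero by (simp add: field_simps)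
  then show ?thesis by (simp add: power_inverse)
qed

lemma finite_supp2_coprodU_gen: "finite (supp2 (coprodU_gen n g))"
  by (cases g) (auto intro!: finite_subset[OF supp2_add] finite_supp2_tens)

lemma lin_ext2_coprodU_gen_F: "lin_ext2 (coprodU_gen n GF) G = G [GF] [] + G (replicate (n - 1) GK) [GF]"
  by (simp add: lin_ext2_add_tensor finite_supp2_tens lin_ext2_tens)

lemma lin_ext2_coprodU_gen_K: "lin_ext2 (coprodU_gen n GK) G = G [GK] [GK]"
  by (simp add: lin_ext2_tens)

lemma lin_ext2_coprodU_gen_E: "lin_ext2 (coprodU_gen n GE) G = G [GE] [GK] + G [] [GE]"
  by (simp add: lin_ext2_add_tensor finite_supp2_tens lin_ext2_tens)

lemma lin_ext2_coprodU_Cons: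
  "lin_ext2 (coprodU n (g # x)) G = lin_ext2 (coprodU_gen n g) (\<lambda>u1 u2. lin_ext2 (coprodU n x) (\<lambda>v1 v2. G (u1 @ v1) (u2 @ v2)))"
  unfolding coprodU_def by (rule lin_ext2_coprodW_Cons[OF finite_supp2_coprodU_gen])

lemma lin_ext2_coprodU_append:
  "lin_ext2 (coprodU n (x @ y)) G = lin_ext2 (coprodU n x) (\<lambda>u1 u2. lin_ext2 (coprodU n y) (\<lambda>v1 v2. G (u1 @ v1) (u2 @ v2)))"
  unfolding coprodU_def by (rule lin_ext2_coprodW_append[OF finite_supp2_coprodU_gen])

lemma finite_supp2_coprodU: "finite (supp2 (coprodU n x))"
  unfolding coprodU_def by (rule finite_supp2_coprodW[OF finite_supp2_coprodU_gen])

(* The scalar by which X^i t^j Y^k * X^i2 t^j2 Y^k2 differs from its normal ordering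
   (cf. normal_factor_append). *)
definition twist :: "nat \<Rightarrow> nat \<Rightarrow> nat \<Rightarrow> nat \<Rightarrow> nat \<Rightarrow> nat \<Rightarrow> complex" where
  "twist i j k i2 j2 k2 = q ^ (k * j2) * inverse q ^ (j * i2)"

definition mono_pair2 :: "genU list \<Rightarrow> nat \<Rightarrow> nat \<Rightarrow> nat \<Rightarrow> nat \<Rightarrow> nat \<Rightarrow> nat \<Rightarrow> complex" where
  "mono_pair2 x i j k i2 j2 k2 = lin_ext2 (coprodU n x) (\<lambda>v1 v2. mono_pair v1 i j k * mono_pair v2 i2 j2 k2)"

definition coeff_E2 :: "nat \<Rightarrow> nat \<Rightarrow> complex" where "coeff_E2 i j = (if Suc i < n then q ^ (i + j) - inverse q ^ j else 0)"

lemma dual_act_E_val: "i < n \<Longrightarrow> k < n \<Longrightarrow> dual_act GE f i j k = qint q k * f i (Suc j) (k - 1) + coeff_E2 i j * f (Suc i) j k"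
  by (simp add: dual_act_E qint_0 coeff_E2_def)

lemma mono_pair2_Cons: "mono_pair2 (g # x) i j k i2 j2 k2 = lin_ext2 (coprodU_gen n g) (\<lambda>u1 u2.
    lin_ext2 (coprodU n x) (\<lambda>v1 v2. mono_pair (u1 @ v1) i j k * mono_pair (u2 @ v2) i2 j2 k2))"
  unfolding mono_pair2_def by (rule lin_ext2_coprodU_Cons)

lemma mono_pair2_Cons_GF:
  assumes IH: "\<And>a b c a2 b2 c2. mono_pair2 x a b c a2 b2 c2 = twist a b c a2 b2 c2 * mono_pair x (a + a2) (b + b2) (c + c2)"
  shows "mono_pair2 (GF # x) i j k i2 j2 k2 = twist i j k i2 j2 k2 * mono_pair (GF # x) (i + i2) (j + j2) (k + k2)"
proof -
  let ?t = "twist i j k i2 j2 k2" and ?L = "mono_pair x (i + i2 - 1) (j + j2) (k + k2)"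
  have expand: "mono_pair2 (GF # x) i j k i2 j2 k2
      = qint (inverse q) i * mono_pair2 x (i - 1) j k i2 j2 k2
        + inverse q ^ (i + j) * qint (inverse q) i2 * mono_pair2 x i j k (i2 - 1) j2 k2"
    unfolding mono_pair2_Cons lin_ext2_coprodU_gen_F
    by (simp add: mono_pair_Cons_GF mono_pair_K_pow q_pow_pred_n[unfolded One_nat_def] mono_pair2_def lin_ext2_scale_left lin_ext2_scale_right lin_ext2_scale_both)
  have left: "qint (inverse q) i * mono_pair2 x (i - 1) j k i2 j2 k2 = qint (inverse q) i * ?t * ?L"
    by (cases i) (simp_all add: qint_0 IH twist_def)
  have right: "inverse q ^ (i + j) * qint (inverse q) i2 * mono_pair2 x i j k (i2 - 1) j2 k2
      = inverse q ^ i * qint (inverse q) i2 * ?t * ?L"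
    by (cases i2) (simp_all add: qint_0 IH twist_def power_add mult_ac)
  show ?thesis
    unfolding expand left right mono_pair_Cons_GF qint_add[OF inv_q_neq_1] by (simp add: algebra_simps)
qed

lemma mono_pair2_Cons_GK:
  assumes IH: "\<And>a b c a2 b2 c2. mono_pair2 x a b c a2 b2 c2 = twist a b c a2 b2 c2 * mono_pair x (a + a2) (b + b2) (c + c2)"
  shows "mono_pair2 (GK # x) i j k i2 j2 k2 = twist i j k i2 j2 k2 * mono_pair (GK # x) (i + i2) (j + j2) (k + k2)"
proof -
  have "mono_pair2 (GK # x) i j k i2 j2 k2 = q ^ (i + j) * q ^ (i2 + j2) * mono_pair2 x i j k i2 j2 k2"
    unfolding mono_pair2_Cons lin_ext2_coprodU_gen_K
    by (simp add: mono_pair_Cons_GK mono_pair2_def lin_ext2_scale_both)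
  then show ?thesis
    by (simp add: IH mono_pair_Cons_GK power_add mult_ac)
qed

lemma mono_pair2_Cons_GE_expand:
  "mono_pair2 (GE # x) i j k i2 j2 k2 =
      q ^ (i2 + j2) * qint q k * mono_pair2 x i (Suc j) (k - 1) i2 j2 k2
    + q ^ (i2 + j2) * (q ^ (i + j) - inverse q ^ j) * mono_pair2 x (Suc i) j k i2 j2 k2
    + (qint q k2 * mono_pair2 x i j k i2 (Suc j2) (k2 - 1)
    + (q ^ (i2 + j2) - inverse q ^ j2) * mono_pair2 x i j k (Suc i2) j2 k2)"
proof -
  have f1: "(\<lambda>v1 v2. mono_pair (GE # v1) i j k * mono_pair (GK # v2) i2 j2 k2) = (\<lambda>v1 v2.
     (q ^ (i2 + j2) * qint q k) * (mono_pair v1 i (Suc j) (k - 1) * mono_pair v2 i2 j2 k2)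
   + (q ^ (i2 + j2) * (q ^ (i + j) - inverse q ^ j)) * (mono_pair v1 (Suc i) j k * mono_pair v2 i2 j2 k2))"
    by (simp add: mono_pair_Cons_GE mono_pair_Cons_GK fun_eq_iff algebra_simps)
  have f2: "(\<lambda>v1 v2. mono_pair v1 i j k * mono_pair (GE # v2) i2 j2 k2) = (\<lambda>v1 v2.
     qint q k2 * (mono_pair v1 i j k * mono_pair v2 i2 (Suc j2) (k2 - 1))
   + (q ^ (i2 + j2) - inverse q ^ j2) * (mono_pair v1 i j k * mono_pair v2 (Suc i2) j2 k2))"
    by (simp add: mono_pair_Cons_GE fun_eq_iff algebra_simps)
  show ?thesis
    unfolding mono_pair2_Cons lin_ext2_coprodU_gen_E
    by (simp add: f1 f2 lin_ext2_add lin_ext2_scale mono_pair2_def)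
qed

lemma mono_pair2_Cons_GE:
  assumes IH: "\<And>a b c a2 b2 c2. mono_pair2 x a b c a2 b2 c2 = twist a b c a2 b2 c2 * mono_pair x (a + a2) (b + b2) (c + c2)"
  shows "mono_pair2 (GE # x) i j k i2 j2 k2 = twist i j k i2 j2 k2 * mono_pair (GE # x) (i + i2) (j + j2) (k + k2)"
proof -
  let ?t = "twist i j k i2 j2 k2"
  let ?LA = "mono_pair x (i + i2) (Suc (j + j2)) (k + k2 - 1)"
  let ?LB = "mono_pair x (Suc (i + i2)) (j + j2) (k + k2)"
  have A1: "q ^ (i2 + j2) * qint q k * mono_pair2 x i (Suc j) (k - 1) i2 j2 k2 = ?t * qint q k * ?LA"
  proof (cases k)
    case (Suc k')
    have "q ^ (i2 + j2) * twist i (Suc j) k' i2 j2 k2 = ?t"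
      using Suc q_nonzero by (simp add: twist_def power_add field_simps)
    then show ?thesis using Suc by (simp add: IH mult_ac)
  qed (simp add: qint_0)
  have A2: "qint q k2 * mono_pair2 x i j k i2 (Suc j2) (k2 - 1) = ?t * q ^ k * qint q k2 * ?LA"
  proof (cases k2)
    case (Suc k2')
    have "twist i j k i2 (Suc j2) k2' = ?t * q ^ k"
      by (simp add: twist_def power_add mult_ac)
    then show ?thesis using Suc by (simp add: IH mult_ac)
  qed (simp add: qint_0)
  have B: "q ^ (i2 + j2) * (q ^ (i + j) - inverse q ^ j) * mono_pair2 x (Suc i) j k i2 j2 k2
      + (q ^ (i2 + j2) - inverse q ^ j2) * mono_pair2 x i j k (Suc i2) j2 k2
      = ?t * (q ^ (i + i2 + (j + j2)) - inverse q ^ (j + j2)) * ?LB"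
    by (simp add: IH twist_def power_add algebra_simps)
  have "mono_pair2 (GE # x) i j k i2 j2 k2 = ?t * qint q k * ?LA + ?t * q ^ k * qint q k2 * ?LA
      + (q ^ (i2 + j2) * (q ^ (i + j) - inverse q ^ j) * mono_pair2 x (Suc i) j k i2 j2 k2
      + (q ^ (i2 + j2) - inverse q ^ j2) * mono_pair2 x i j k (Suc i2) j2 k2)"
    unfolding mono_pair2_Cons_GE_expand A1 A2 by (simp add: algebra_simps)
  also have "\<dots> = ?t * ((qint q k + q ^ k * qint q k2) * ?LA
      + (q ^ (i + i2 + (j + j2)) - inverse q ^ (j + j2)) * ?LB)"
    unfolding B by (simp add: algebra_simps)
  also have "\<dots> = ?t * mono_pair (GE # x) (i + i2) (j + j2) (k + k2)"
    by (simp add: mono_pair_Cons_GE qint_add[OF q_neq_1] power_add)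
  finally show ?thesis .
qed

lemma mono_pair2_eq: "mono_pair2 x i j k i2 j2 k2 = twist i j k i2 j2 k2 * mono_pair x (i + i2) (j + j2) (k + k2)"
proof (induction x arbitrary: i j k i2 j2 k2)
  case Nil
  show ?case by (auto simp: mono_pair2_def coprodU_def lin_ext2_fa2_one mono_pair_Nil mono_counit_def twist_def)
next
  case (Cons g x)
  show ?case
    by (cases g) (auto intro: mono_pair2_Cons_GF[OF Cons.IH] mono_pair2_Cons_GK[OF Cons.IH] mono_pair2_Cons_GE[OF Cons.IH])
qed

lemma pairing_append_left: "pairing (a @ b) x = lin_ext2 (coprodU n x) (\<lambda>v1 v2. pairing a v1 * pairing b v2)"
proof -
  have "lin_ext2 (coprodU n x) (\<lambda>v1 v2. pairing a v1 * pairing b v2) = normal_factor q a * normal_factor q b *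
      mono_pair2 x (count_list a GX) (count_list a GT) (count_list a GY) (count_list b GX) (count_list b GT) (count_list b GY)"
    by (simp add: pairing_def mono_pair2_def lin_ext2_scale_both)
  then show ?thesis
    by (simp add: pairing_def mono_pair2_eq normal_factor_append twist_def mult_ac)
qed

lemma pairing_Cons_K: "pairing u (GK # z) = q ^ (count_list u GX + count_list u GT) * pairing u z"
proof -
  have "mono_pair (GK # z) i j k = q ^ (i + j) * mono_pair z i j k" for i j k
    by (cases "i < n \<and> k < n") (auto simp: mono_pair_Cons dual_act_K mono_pair_outside_box)
  then show ?thesis by (simp add: pairing_def mult_ac)
qed

lemma finite_supp2_coprodA_gen: "finite (supp2 (coprodA_gen q n g))"
  by (cases g) (auto intro!: finite_subset[OF supp2_add] finite_supp2_tens finite_supp2_tens_sum)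

lemma lin_ext2_coprodA_Cons:
  "lin_ext2 (coprodA q n (g # x)) G = lin_ext2 (coprodA_gen q n g) (\<lambda>u1 u2. lin_ext2 (coprodA q n x) (\<lambda>v1 v2. G (u1 @ v1) (u2 @ v2)))"
  unfolding coprodA_def by (rule lin_ext2_coprodW_Cons[OF finite_supp2_coprodA_gen])

lemma lin_ext2_coprodA_Nil: "lin_ext2 (coprodA q n []) G = G [] []"
  unfolding coprodA_def by (rule lin_ext2_coprodW_Nil)

lemma finite_supp2_coprodA: "finite (supp2 (coprodA q n x))"
  unfolding coprodA_def by (rule finite_supp2_coprodW[OF finite_supp2_coprodA_gen])

definition coeff_T :: "nat \<Rightarrow> complex" where
  "coeff_T a = q * (q - 1) powi (int a - 1) * (1 - inverse q ^ (a + 1))"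

lemma lin_ext2_coprodA_gen_X: "lin_ext2 (coprodA_gen q n GX) G = G [GX] [] + (\<Sum>a<n - 1. (q - 1) ^ a * G (GT # replicate a GY) (replicate (a + 1) GX))"
proof -
  have "lin_ext2 (coprodA_gen q n GX) G = lin_ext2 (tens (fa_word [GX]) (fa_word [])) G
     + lin_ext2 (\<lambda>u v. \<Sum>a\<in>{0..<n-1}. (q - 1) ^ a * tens (fa_word (GT # replicate a GY)) (fa_word (replicate (a + 1) GX)) u v) G"
    by (simp add: lin_ext2_add_tensor finite_supp2_tens finite_supp2_tens_sum)
  then show ?thesis by (simp add: lin_ext2_tens lin_ext2_tens_sum atLeast0LessThan)
qed

lemma lin_ext2_coprodA_gen_T: "lin_ext2 (coprodA_gen q n GT) G = (\<Sum>a<n - 1. coeff_T a * G (GT # replicate a GY) (replicate a GX @ [GT]))"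
  by (simp add: lin_ext2_tens_sum atLeast0LessThan coeff_T_def)

lemma lin_ext2_coprodA_gen_Y: "lin_ext2 (coprodA_gen q n GY) G = G [] [GY] + (\<Sum>a<n - 1. (1 - inverse q) ^ a * G (replicate (a + 1) GY) (replicate a GX @ [GT]))"
proof -
  have "lin_ext2 (coprodA_gen q n GY) G = lin_ext2 (tens (fa_word []) (fa_word [GY])) G
     + lin_ext2 (\<lambda>u v. \<Sum>a\<in>{0..<n-1}. (1 - inverse q) ^ a * tens (fa_word (replicate (a + 1) GY)) (fa_word (replicate a GX @ [GT])) u v) G"
    by (simp add: lin_ext2_add_tensor finite_supp2_tens finite_supp2_tens_sum)
  then show ?thesis by (simp add: lin_ext2_tens lin_ext2_tens_sum atLeast0LessThan)
qed

definition coeff_T_closed :: "nat \<Rightarrow> complex" where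
  "coeff_T_closed a = (q - 1) ^ a * (q ^ (a + 1) - 1) / ((q - 1) * q ^ a)"

lemma q_minus_1_nonzero: "q - 1 \<noteq> 0" using q_neq_1 by simp

lemma coeff_T_eq_closed: "coeff_T a = coeff_T_closed a"
proof (cases a)
  case 0
  have "coeff_T 0 = q * inverse (q - 1) * (1 - inverse q)" by (simp add: coeff_T_def power_int_minus)
  also have "\<dots> = 1" using q_nonzero q_minus_1_nonzero by (simp add: field_simps)
  finally show ?thesis using 0 q_minus_1_nonzero by (simp add: coeff_T_closed_def)
next
  case (Suc a')
  have "coeff_T a = q * (q - 1) ^ a' * (1 - inverse q ^ (a + 1))"
    using Suc by (simp add: coeff_T_def)
  also have "\<dots> = coeff_T_closed a" using Suc q_nonzero q_minus_1_nonzero by (simp add: coeff_T_closed_def field_simps power_inverse)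
  finally show ?thesis .
qed

lemma coeff_T_0: "coeff_T 0 = 1" using q_minus_1_nonzero by (simp add: coeff_T_eq_closed coeff_T_closed_def)

lemma coeff_T_last: "coeff_T (n - 1) = 0"
proof -
  have "q ^ (n - 1 + 1) = 1" using n_gt_1 q_pow_n by simp
  then show ?thesis by (simp add: coeff_T_eq_closed coeff_T_closed_def)
qed

lemma coeff_T_Y: "(1 - inverse q) ^ a * qint q (a + 1) = coeff_T a"
  unfolding coeff_T_eq_closed coeff_T_closed_def qint_def using q_nonzero q_minus_1_nonzero
  by (simp add: field_simps power_mult_distrib)

lemma coeff_T_convolution: "(q - inverse q) * (\<Sum>b\<le>s. (q - 1) ^ b * q ^ b * coeff_T (s - b)) = coeff_T (s + 1) * qint q (s + 1)"
proof -
  let ?K = "(q - 1) ^ s / ((q - 1) * q ^ s)"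
  have tm: "(q - 1) ^ b * q ^ b * coeff_T (s - b) = ?K * (q ^ (s + 1) * q ^ b - q ^ b * q ^ b)" if "b \<le> s" for b
  proof -
    define d where "d = s - b"
    have d: "s = b + d" using that by (simp add: d_def)
    show ?thesis unfolding coeff_T_eq_closed coeff_T_closed_def d using q_nonzero q_minus_1_nonzero
      by (simp add: field_simps power_add)
  qed
  have "(\<Sum>b\<le>s. (q - 1) ^ b * q ^ b * coeff_T (s - b)) = ?K * (q ^ (s + 1) * (\<Sum>b\<le>s. q ^ b) - (\<Sum>b\<le>s. q ^ b * q ^ b))"
    by (simp add: tm sum_distrib_left sum_subtractf right_diff_distrib)
  moreover have "(q - inverse q) * (?K * (q ^ (s + 1) * (\<Sum>b\<le>s. q ^ b) - (\<Sum>b\<le>s. q ^ b * q ^ b)))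
      = coeff_T (s + 1) * qint q (s + 1)"
  proof -
    let ?S1 = "\<Sum>b\<le>s. q ^ b" and ?S2 = "\<Sum>b\<le>s. q ^ b * q ^ b"
    have key: "(q * q - 1) * (q ^ (s + 1) * ?S1 - ?S2) = (q ^ (s + 2) - 1) * (q ^ (s + 1) - 1)"
      by (rule geometric_sum_convolution)
    have "(q - inverse q) * (?K * (q ^ (s + 1) * ?S1 - ?S2))
        = (q - 1) ^ s / ((q - 1) * q ^ (s + 1)) * ((q * q - 1) * (q ^ (s + 1) * ?S1 - ?S2))"
      using q_nonzero q_minus_1_nonzero by (simp add: field_simps)
    also have "\<dots> = (q - 1) ^ s / ((q - 1) * q ^ (s + 1)) * ((q ^ (s + 2) - 1) * (q ^ (s + 1) - 1))"
      by (simp only: key)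
    also have "\<dots> = coeff_T (s + 1) * qint q (s + 1)"
    proof -
      have h1: "(1 - q ^ (s + 1)) / (1 - q) = (q ^ (s + 1) - 1) / (q - 1)"
        by (metis minus_diff_eq minus_divide_divide)
      have aux: "A / (x * Q) * (B * C) = A * x * B / (x * Q) * (C / x)"
        if "x \<noteq> 0" "Q \<noteq> 0" for A B C Q x :: complex
        using that by (simp add: field_simps)
      have "coeff_T (s + 1) * qint q (s + 1) = (q - 1) ^ s * (q - 1) * (q ^ (s + 2) - 1) / ((q - 1) * q ^ (s + 1)) * ((q ^ (s + 1) - 1) / (q - 1))"
        unfolding coeff_T_eq_closed coeff_T_closed_def qint_def h1 by (simp add: algebra_simps)
      then show ?thesis using aux[OF q_minus_1_nonzero, of "q ^ (s + 1)" "(q - 1) ^ s" "q ^ (s + 2) - 1" "q ^ (s + 1) - 1"] q_nonzero by simp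
    qed
    finally show ?thesis .
  qed
  ultimately show ?thesis by simp
qed

declare coprodA_gen.simps[simp del] coprodU_gen.simps[simp del]


definition coprod_compat :: "genA list \<Rightarrow> genU list \<Rightarrow> genU list \<Rightarrow> bool" where
  "coprod_compat a x y \<longleftrightarrow> pairing a (x @ y) = lin_ext2 (coprodA q n a) (\<lambda>u1 u2. pairing u1 x * pairing u2 y)"

lemma lin_ext2_coprodA_single: "lin_ext2 (coprodA q n [g]) G = lin_ext2 (coprodA_gen q n g) G"
  by (simp add: lin_ext2_coprodA_Cons lin_ext2_coprodA_Nil)

lemma lin_ext2_coprodA_two: "lin_ext2 (coprodA q n [g, h]) G = lin_ext2 (coprodA_gen q n g) (\<lambda>u1 u2. lin_ext2 (coprodA_gen q n h) (\<lambda>v1 v2. G (u1 @ v1) (u2 @ v2)))"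
  by (simp add: lin_ext2_coprodA_Cons lin_ext2_coprodA_Nil)

lemma mono_pair_Cons_F_0: "mono_pair (GF # z) 0 j k = 0"
  by (simp add: mono_pair_Cons dual_act_F)

lemma coeff_E2_0_1: "coeff_E2 0 1 = q - inverse q"
  using n_gt_1 by (simp add: coeff_E2_def)

lemma mono_pair_Cons_GE_0_1:
  "mono_pair (GE # x) 0 1 a = qint q a * mono_pair x 0 2 (a - 1) + coeff_E2 0 1 * mono_pair x 1 1 a"
  using coeff_E2_0_1 by (simp add: mono_pair_Cons_GE numeral_2_eq_2)

lemma coeff_E2_1_0_mult: "coeff_E2 1 0 * (1 + inverse q) = coeff_E2 0 1"
proof (cases "2 < n")
  case True
  then show ?thesis using n_gt_1 q_nonzero by (simp add: coeff_E2_def field_simps)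
next
  case False
  then have "n = 2" using n_gt_1 by auto
  then have "(q - 1) * (q + 1) = 0" using q_pow_n by (simp add: power2_eq_square algebra_simps)
  then have "q = -1" using q_neq_1 by (simp add: eq_neg_iff_add_eq_0)
  then have "q - inverse q = 0" by simp
  then show ?thesis using False coeff_E2_0_1 by (simp add: coeff_E2_def)
qed

lemma coprod_compat_gen_Nil: "coprod_compat [g] [] y"
  using n_gt_1 coeff_T_0 by (cases g) (simp_all add: coprod_compat_def lin_ext2_coprodA_single lin_ext2_coprodA_gen_X lin_ext2_coprodA_gen_T lin_ext2_coprodA_gen_Y pairing_def mono_pair_Nil mono_counit_def sum_delta_0)

lemma coprod_compat_gen_Cons_K: "coprod_compat [g] x y \<Longrightarrow> coprod_compat [g] (GK # x) y"
  by (cases g) (simp_all add: coprod_compat_def lin_ext2_coprodA_single lin_ext2_coprodA_gen_X lin_ext2_coprodA_gen_T lin_ext2_coprodA_gen_Y pairing_Cons_K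
      sum_distrib_left distrib_left mult_ac)

lemma coprod_compat_gen_Cons_F:
  assumes IH: "\<And>a y. coprod_compat a x y"
  shows "coprod_compat [g] (GF # x) y"
proof (cases g)
  case GX
  have "pairing [GX] (GF # (x @ y)) = pairing [] (x @ y)"
    using n_gt_1 qint_1[OF inv_q_neq_1] by (simp add: pairing_def mono_pair_Cons dual_act_F)
  also have "\<dots> = pairing [] x * pairing [] y" using IH[of "[]" y] by (simp add: coprod_compat_def lin_ext2_coprodA_Nil)
  finally show ?thesis using GX n_gt_1 qint_1[OF inv_q_neq_1]
    by (simp add: coprod_compat_def lin_ext2_coprodA_single lin_ext2_coprodA_gen_X pairing_def mono_pair_Cons_F_0 mono_pair_Cons dual_act_F)
next
  case GT
  show ?thesis using GT by (simp add: coprod_compat_def lin_ext2_coprodA_single lin_ext2_coprodA_gen_T pairing_def mono_pair_Cons_F_0)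
next
  case GY
  show ?thesis using GY by (simp add: coprod_compat_def lin_ext2_coprodA_single lin_ext2_coprodA_gen_Y pairing_def mono_pair_Cons_F_0)
qed

lemma coprod_compat_Y_Cons_E:
  assumes IH: "\<And>a y. coprod_compat a x y"
  shows "coprod_compat [GY] (GE # x) y"
proof -
  have "pairing [GY] (GE # (x @ y)) = pairing [GT] (x @ y)"
    using n_gt_1 qint_1[OF q_neq_1] by (simp add: pairing_def mono_pair_Cons dual_act_E_val qint_0 coeff_E2_def)
  also have "\<dots> = (\<Sum>a<n - 1. coeff_T a * (mono_pair x 0 1 a * mono_pair y a 1 0))"
    using IH[of "[GT]" y] by (simp add: coprod_compat_def lin_ext2_coprodA_single lin_ext2_coprodA_gen_T pairing_def)
  also have "\<dots> = lin_ext2 (coprodA q n [GY]) (\<lambda>u1 u2. pairing u1 (GE # x) * pairing u2 y)"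
  proof -
    have t0: "mono_pair (GE # x) 0 0 0 = 0" using n_gt_1 by (simp add: mono_pair_Cons dual_act_E_val qint_0 coeff_E2_def)
    have ta: "mono_pair (GE # x) 0 0 (Suc a) = qint q (Suc a) * mono_pair x 0 1 a" if "a < n - 1" for a
      using that n_gt_1 by (simp add: mono_pair_Cons dual_act_E_val qint_0 coeff_E2_def)
    have "lin_ext2 (coprodA q n [GY]) (\<lambda>u1 u2. pairing u1 (GE # x) * pairing u2 y)
        = (\<Sum>a<n - 1. (1 - inverse q) ^ a * (mono_pair (GE # x) 0 0 (Suc a) * mono_pair y a 1 0))"
      by (simp add: lin_ext2_coprodA_single lin_ext2_coprodA_gen_Y pairing_def t0)
    also have "\<dots> = (\<Sum>a<n - 1. coeff_T a * (mono_pair x 0 1 a * mono_pair y a 1 0))"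
    proof (rule sum.cong[OF refl])
      fix a assume "a \<in> {..<n - 1}"
      then show "(1 - inverse q) ^ a * (mono_pair (GE # x) 0 0 (Suc a) * mono_pair y a 1 0) = coeff_T a * (mono_pair x 0 1 a * mono_pair y a 1 0)"
        using ta[of a] coeff_T_Y[of a] by (simp add: mult_ac)
    qed
    finally show ?thesis by simp
  qed
  finally show ?thesis by (simp add: coprod_compat_def)
qed

lemma sum_q_pow_eq_qint: "(\<Sum>b\<le>s. q ^ b) = qint q (s + 1)"
proof -
  have "(\<Sum>b\<le>s. q ^ b) * (q - 1) = q ^ (s + 1) - 1" by (rule geometric_sum_atMost)
  then show ?thesis unfolding qint_def using q_minus_1_nonzero
    by (simp add: field_simps)
qed

(* Regrouped along the diagonals a + b = s, the coefficient is (q - 1)^s (1 + q + ... + q^s). *)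
lemma coprod_compat_X_Cons_E_diagonal:
  "coeff_E2 1 0 * (\<Sum>a<n - 1. \<Sum>b<n - 1. (q - 1) ^ a * (q - 1) ^ b * q ^ a
          * (mono_pair x 0 2 (a + b) * mono_pair y (Suc (Suc (a + b))) 0 0))
      = (\<Sum>a<n - 1. (q - 1) ^ a * (qint q a * mono_pair x 0 2 (a - 1) * mono_pair y (Suc a) 0 0))"
proof -
  define e where "e a = (q - 1) ^ a" for a :: nat
  define D where "D s = mono_pair x 0 2 s * mono_pair y (Suc (Suc s)) 0 0" for s
  have "coeff_E2 1 0 * (\<Sum>a<n - 1. \<Sum>b<n - 1. e a * e b * q ^ a * D (a + b))
      = (\<Sum>a<n - 1. e a * (qint q a * mono_pair x 0 2 (a - 1) * mono_pair y (Suc a) 0 0))"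
  proof (cases "2 < n")
    case False
    then have "n - 1 = Suc 0" using n_gt_1 by auto
    then show ?thesis using False by (simp add: coeff_E2_def qint_0)
  next
    case True
    have "(\<Sum>a<n - 1. \<Sum>b<n - 1. e a * e b * q ^ a * D (a + b))
        = (\<Sum>a<n - 1. \<Sum>b<n - 1. if a + b < n - 2 then e a * e b * q ^ a * D (a + b) else 0)"
      by (intro sum.cong refl) (auto simp: D_def mono_pair_outside_box)
    also have "\<dots> = (\<Sum>s<n - 2. \<Sum>a\<le>s. e a * e (s - a) * q ^ a * D (a + (s - a)))"
      by (rule sum_square_triangle) simp
    also have "\<dots> = (\<Sum>s<n - 2. (q - 1) ^ s * qint q (s + 1) * D s)"
    proof (rule sum.cong[OF refl])
      fix s
      have "(\<Sum>a\<le>s. e a * e (s - a) * q ^ a * D (a + (s - a))) = (\<Sum>a\<le>s. (q - 1) ^ s * D s * q ^ a)"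
        by (rule sum.cong[OF refl]) (auto simp: e_def power_add[symmetric] mult_ac)
      also have "\<dots> = (q - 1) ^ s * D s * (\<Sum>a\<le>s. q ^ a)" by (simp add: sum_distrib_left)
      finally show "(\<Sum>a\<le>s. e a * e (s - a) * q ^ a * D (a + (s - a))) = (q - 1) ^ s * qint q (s + 1) * D s"
        by (simp add: sum_q_pow_eq_qint mult_ac)
    qed
    finally have l: "coeff_E2 1 0 * (\<Sum>a<n - 1. \<Sum>b<n - 1. e a * e b * q ^ a * D (a + b))
       = (\<Sum>s<n - 2. (q - 1) ^ (s + 1) * qint q (s + 1) * D s)"
      using True by (simp add: coeff_E2_def sum_distrib_left mult_ac)
    have nn: "n - 1 = Suc (n - 2)" using True by auto
    have "(\<Sum>a<n - 1. e a * (qint q a * mono_pair x 0 2 (a - 1) * mono_pair y (Suc a) 0 0))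
        = (\<Sum>s<n - 2. e (Suc s) * (qint q (Suc s) * mono_pair x 0 2 s * mono_pair y (Suc (Suc s)) 0 0))"
      unfolding nn using sum_lessThan_Suc_shift_0[of "\<lambda>a. e a * (qint q a * mono_pair x 0 2 (a - 1) * mono_pair y (Suc a) 0 0)" "n - 2"]
      by (simp add: qint_0)
    also have "\<dots> = (\<Sum>s<n - 2. (q - 1) ^ (s + 1) * qint q (s + 1) * D s)"
      by (rule sum.cong[OF refl]) (simp add: e_def qint_0 D_def mult_ac)
    finally show ?thesis using l by simp
  qed
  then show ?thesis by (simp only: e_def D_def)
qed

(* <X, E z> is a multiple of <X^2, z> (and <t, E z> of <X t, z>), so the induction hypothesis
   for the two-letter words X X and X t carries the computation. *)
lemma coprod_compat_X_Cons_E: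
  assumes IH: "\<And>a y. coprod_compat a x y"
  shows "coprod_compat [GX] (GE # x) y"
proof -
  define e where "e a = (q - 1) ^ a" for a :: nat
  define B where "B a = mono_pair x 1 1 a * mono_pair y (Suc a) 0 0" for a
  define D where "D s = mono_pair x 0 2 s * mono_pair y (Suc (Suc s)) 0 0" for s
  define A0 where "A0 = mono_pair x 2 0 0 * mono_pair y 0 0 0"
  have E1: "lin_ext2 (coprodA q n [GX, GX]) (\<lambda>u1 u2. pairing u1 x * pairing u2 y)
      = A0 + (\<Sum>b<n - 1. e b * B b) + (\<Sum>a<n - 1. e a * (inverse q * B a + (\<Sum>b<n - 1. e b * (q ^ a * D (a + b)))))"
    unfolding lin_ext2_coprodA_two lin_ext2_coprodA_gen_X
    by (simp add: pairing_def e_def B_def D_def A0_def mult_ac numeral_2_eq_2)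
  have LHS: "pairing [GX] (GE # (x @ y)) = coeff_E2 1 0 * mono_pair (x @ y) 2 0 0"
    using n_gt_1 by (simp add: pairing_def mono_pair_Cons dual_act_E_val qint_0 numeral_2_eq_2)
  have L2: "mono_pair (x @ y) 2 0 0 = lin_ext2 (coprodA q n [GX, GX]) (\<lambda>u1 u2. pairing u1 x * pairing u2 y)"
    using IH[of "[GX, GX]" y] by (simp add: coprod_compat_def pairing_def numeral_2_eq_2)
  have R1: "mono_pair (GE # x) 1 0 0 = coeff_E2 1 0 * mono_pair x 2 0 0"
    using n_gt_1 by (simp add: mono_pair_Cons dual_act_E_val qint_0 numeral_2_eq_2)
  have RHS: "lin_ext2 (coprodA q n [GX]) (\<lambda>u1 u2. pairing u1 (GE # x) * pairing u2 y)
     = coeff_E2 1 0 * A0 + (\<Sum>a<n - 1. e a * (qint q a * mono_pair x 0 2 (a - 1) * mono_pair y (Suc a) 0 0))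
       + coeff_E2 0 1 * (\<Sum>a<n - 1. e a * B a)"
    unfolding lin_ext2_coprodA_single lin_ext2_coprodA_gen_X
    using R1 mono_pair_Cons_GE_0_1 by (simp add: pairing_def e_def B_def A0_def sum.distrib sum_distrib_left algebra_simps)
  have F2: "coeff_E2 1 0 * (\<Sum>a<n - 1. \<Sum>b<n - 1. e a * e b * q ^ a * D (a + b))
      = (\<Sum>a<n - 1. e a * (qint q a * mono_pair x 0 2 (a - 1) * mono_pair y (Suc a) 0 0))"
    by (simp only: e_def D_def coprod_compat_X_Cons_E_diagonal)
  have inner: "(\<Sum>a<n - 1. e a * (inverse q * B a + (\<Sum>b<n - 1. e b * (q ^ a * D (a + b)))))
      = inverse q * (\<Sum>a<n - 1. e a * B a) + (\<Sum>a<n - 1. \<Sum>b<n - 1. e a * e b * q ^ a * D (a + b))"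
    by (simp add: sum.distrib sum_distrib_left distrib_left mult_ac)
  have "pairing [GX] (GE # (x @ y)) = coeff_E2 1 0 * A0 + coeff_E2 1 0 * (1 + inverse q) * (\<Sum>b<n - 1. e b * B b)
      + coeff_E2 1 0 * (\<Sum>a<n - 1. \<Sum>b<n - 1. e a * e b * q ^ a * D (a + b))"
    unfolding LHS L2 E1 inner by (simp add: algebra_simps)
  also have "\<dots> = lin_ext2 (coprodA q n [GX]) (\<lambda>u1 u2. pairing u1 (GE # x) * pairing u2 y)"
    unfolding coeff_E2_1_0_mult F2 RHS by (simp add: algebra_simps)
  finally show ?thesis by (simp add: coprod_compat_def)
qed

lemma coprod_compat_T_Cons_E_diagonal:
  "coeff_E2 0 1 * (\<Sum>b<n - 1. (q - 1) ^ b * (\<Sum>a<n - 1. coeff_T a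
          * (q ^ b * (mono_pair x 0 2 (b + a) * mono_pair y (Suc (b + a)) 1 0))))
      = (\<Sum>a<n - 1. coeff_T a * (qint q a * mono_pair x 0 2 (a - 1) * mono_pair y a 1 0))"
proof -
  define e where "e a = (q - 1) ^ a" for a :: nat
  define D where "D s = mono_pair x 0 2 s * mono_pair y (Suc s) 1 0" for s
  have "coeff_E2 0 1 * (\<Sum>b<n - 1. e b * (\<Sum>a<n - 1. coeff_T a * (q ^ b * D (b + a))))
      = (\<Sum>a<n - 1. coeff_T a * (qint q a * mono_pair x 0 2 (a - 1) * mono_pair y a 1 0))"
  proof -
    have "(\<Sum>b<n - 1. e b * (\<Sum>a<n - 1. coeff_T a * (q ^ b * D (b + a))))
        = (\<Sum>b<n - 1. \<Sum>a<n - 1. if b + a < n - 1 then e b * q ^ b * coeff_T a * D (b + a) else 0)"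
      by (intro sum.cong refl) (auto simp: D_def mono_pair_outside_box sum_distrib_left mult_ac intro!: sum.cong)
    also have "\<dots> = (\<Sum>s<n - 1. \<Sum>b\<le>s. e b * q ^ b * coeff_T (s - b) * D (b + (s - b)))"
      by (rule sum_square_triangle) simp
    also have "\<dots> = (\<Sum>s<n - 1. (\<Sum>b\<le>s. (q - 1) ^ b * q ^ b * coeff_T (s - b)) * D s)"
      by (rule sum.cong[OF refl]) (auto simp: e_def sum_distrib_right intro!: sum.cong)
    finally have X: "(\<Sum>b<n - 1. e b * (\<Sum>a<n - 1. coeff_T a * (q ^ b * D (b + a))))
        = (\<Sum>s<n - 1. (\<Sum>b\<le>s. (q - 1) ^ b * q ^ b * coeff_T (s - b)) * D s)" .
    have "coeff_E2 0 1 * (\<Sum>b<n - 1. e b * (\<Sum>a<n - 1. coeff_T a * (q ^ b * D (b + a))))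
        = (q - inverse q) * (\<Sum>s<n - 1. (\<Sum>b\<le>s. (q - 1) ^ b * q ^ b * coeff_T (s - b)) * D s)"
      by (simp only: X coeff_E2_0_1)
    also have "\<dots> = (\<Sum>s<n - 1. (q - inverse q) * ((\<Sum>b\<le>s. (q - 1) ^ b * q ^ b * coeff_T (s - b)) * D s))"
      by (rule sum_distrib_left)
    also have "\<dots> = (\<Sum>s<n - 1. ((q - inverse q) * (\<Sum>b\<le>s. (q - 1) ^ b * q ^ b * coeff_T (s - b))) * D s)"
      by (simp only: mult.assoc)
    also have "\<dots> = (\<Sum>s<n - 1. coeff_T (s + 1) * qint q (s + 1) * D s)"
      by (simp only: coeff_T_convolution)
    also have "\<dots> = (\<Sum>s<n - 2. coeff_T (s + 1) * qint q (s + 1) * D s)"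
    proof -
      have nn: "n - 1 = Suc (n - 2)" using n_gt_1 by auto
      have "coeff_T (n - 2 + 1) = 0" using coeff_T_last nn by simp
      then show ?thesis unfolding nn by simp
    qed
    also have "\<dots> = (\<Sum>a<n - 1. coeff_T a * (qint q a * mono_pair x 0 2 (a - 1) * mono_pair y a 1 0))"
    proof -
      have nn: "n - 1 = Suc (n - 2)" using n_gt_1 by auto
      have "(\<Sum>a<n - 1. coeff_T a * (qint q a * mono_pair x 0 2 (a - 1) * mono_pair y a 1 0))
          = (\<Sum>s<n - 2. coeff_T (Suc s) * (qint q (Suc s) * mono_pair x 0 2 (Suc s - 1) * mono_pair y (Suc s) 1 0))"
        unfolding nn using sum_lessThan_Suc_shift_0[of "\<lambda>a. coeff_T a * (qint q a * mono_pair x 0 2 (a - 1) * mono_pair y a 1 0)" "n - 2"]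
        by (simp add: qint_0)
      also have "\<dots> = (\<Sum>s<n - 2. coeff_T (s + 1) * qint q (s + 1) * D s)"
        by (rule sum.cong[OF refl]) (simp add: qint_0 D_def mult_ac)
      finally show ?thesis by simp
    qed
    finally show ?thesis .
  qed
  then show ?thesis by (simp only: e_def D_def)
qed

lemma coprod_compat_T_Cons_E:
  assumes IH: "\<And>a y. coprod_compat a x y"
  shows "coprod_compat [GT] (GE # x) y"
proof -
  define e where "e a = (q - 1) ^ a" for a :: nat
  define C where "C a = mono_pair x 1 1 a * mono_pair y a 1 0" for a
  define D where "D s = mono_pair x 0 2 s * mono_pair y (Suc s) 1 0" for s
  have E1: "lin_ext2 (coprodA q n [GX, GT]) (\<lambda>u1 u2. pairing u1 x * pairing u2 y)
      = (\<Sum>a<n - 1. coeff_T a * C a) + (\<Sum>b<n - 1. e b * (\<Sum>a<n - 1. coeff_T a * (q ^ b * D (b + a))))"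
    unfolding lin_ext2_coprodA_two lin_ext2_coprodA_gen_X lin_ext2_coprodA_gen_T
    by (simp add: pairing_def e_def C_def D_def mult_ac numeral_2_eq_2)
  have LHS: "pairing [GT] (GE # (x @ y)) = coeff_E2 0 1 * mono_pair (x @ y) 1 1 0"
    using n_gt_1 by (simp add: pairing_def mono_pair_Cons dual_act_E_val qint_0)
  have L2: "mono_pair (x @ y) 1 1 0 = lin_ext2 (coprodA q n [GX, GT]) (\<lambda>u1 u2. pairing u1 x * pairing u2 y)"
    using IH[of "[GX, GT]" y] by (simp add: coprod_compat_def pairing_def)
  have RHS: "lin_ext2 (coprodA q n [GT]) (\<lambda>u1 u2. pairing u1 (GE # x) * pairing u2 y)
     = (\<Sum>a<n - 1. coeff_T a * (qint q a * mono_pair x 0 2 (a - 1) * mono_pair y a 1 0))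
       + coeff_E2 0 1 * (\<Sum>a<n - 1. coeff_T a * C a)"
    unfolding lin_ext2_coprodA_single lin_ext2_coprodA_gen_T
    using mono_pair_Cons_GE_0_1 by (simp add: pairing_def C_def sum.distrib sum_distrib_left algebra_simps)
  have F3: "coeff_E2 0 1 * (\<Sum>b<n - 1. e b * (\<Sum>a<n - 1. coeff_T a * (q ^ b * D (b + a))))
      = (\<Sum>a<n - 1. coeff_T a * (qint q a * mono_pair x 0 2 (a - 1) * mono_pair y a 1 0))"
    by (simp only: e_def D_def coprod_compat_T_Cons_E_diagonal)
  have "pairing [GT] (GE # (x @ y)) = coeff_E2 0 1 * (\<Sum>a<n - 1. coeff_T a * C a)
      + coeff_E2 0 1 * (\<Sum>b<n - 1. e b * (\<Sum>a<n - 1. coeff_T a * (q ^ b * D (b + a))))"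
    unfolding LHS L2 E1 by (simp add: algebra_simps)
  also have "\<dots> = lin_ext2 (coprodA q n [GT]) (\<lambda>u1 u2. pairing u1 (GE # x) * pairing u2 y)"
    unfolding F3 RHS by (simp add: algebra_simps)
  finally show ?thesis by (simp add: coprod_compat_def)
qed

lemma coprod_compat_gen:
  assumes IH: "\<And>x a y. EF_count x < N \<Longrightarrow> coprod_compat a x y"
  shows "EF_count z \<le> N \<Longrightarrow> coprod_compat [g] z y"
proof (induction z arbitrary: y)
  case Nil
  show ?case by (rule coprod_compat_gen_Nil)
next
  case (Cons h z)
  show ?case
  proof (cases h)
    case GK
    then show ?thesis using Cons by (simp add: coprod_compat_gen_Cons_K EF_count_def)
  next
    case GF
    then have "EF_count z < N" using Cons.prems by (simp add: EF_count_def)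
    then show ?thesis using GF IH coprod_compat_gen_Cons_F by blast
  next
    case GE
    then have "EF_count z < N" using Cons.prems by (simp add: EF_count_def)
    then show ?thesis
      using GE IH coprod_compat_X_Cons_E coprod_compat_T_Cons_E coprod_compat_Y_Cons_E by (cases g) auto
  qed
qed

lemma coprod_compat_Nil: "coprod_compat [] x y"
  by (simp add: coprod_compat_def lin_ext2_coprodA_Nil pairing_Nil_left counitU_append)

lemma coprod_compat_Cons:
  assumes split: "\<And>x1 x2 y'. (x1, x2) \<in> supp2 (coprodU n x) \<Longrightarrow> coprod_compat [g] x1 y' \<and> coprod_compat w x2 y'"
  shows "coprod_compat (g # w) x y"
proof -
  let ?X = "coprodU n x" and ?Y = "coprodU n y" and ?G = "coprodA_gen q n g" and ?W = "coprodA q n w"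
  have "pairing (g # w) (x @ y) = lin_ext2 ?X (\<lambda>x1 x2. lin_ext2 ?Y (\<lambda>y1 y2. pairing [g] (x1 @ y1) * pairing w (x2 @ y2)))"
    using pairing_append_left[of "[g]" w "x @ y"] by (simp add: lin_ext2_coprodU_append)
  also have "\<dots> = lin_ext2 ?X (\<lambda>x1 x2. lin_ext2 ?Y (\<lambda>y1 y2.
      lin_ext2 ?G (\<lambda>u1 u2. pairing u1 x1 * pairing u2 y1) * lin_ext2 ?W (\<lambda>w1 w2. pairing w1 x2 * pairing w2 y2)))"
    using split by (intro lin_ext2_cong) (simp add: coprod_compat_def lin_ext2_coprodA_single)
  also have "\<dots> = lin_ext2 ?G (\<lambda>u1 u2. lin_ext2 ?W (\<lambda>w1 w2. lin_ext2 ?X (\<lambda>x1 x2. lin_ext2 ?Y (\<lambda>y1 y2.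
      (pairing u1 x1 * pairing u2 y1) * (pairing w1 x2 * pairing w2 y2)))))"
    unfolding lin_ext2_mult by (rule lin_ext2_4swap)
  also have "\<dots> = lin_ext2 ?G (\<lambda>u1 u2. lin_ext2 ?W (\<lambda>w1 w2. lin_ext2 ?X (\<lambda>x1 x2. lin_ext2 ?Y (\<lambda>y1 y2.
      (pairing u1 x1 * pairing w1 x2) * (pairing u2 y1 * pairing w2 y2)))))"
    by (simp only: mult_ac)
  also have "\<dots> = lin_ext2 (coprodA q n (g # w)) (\<lambda>a1 a2. pairing a1 x * pairing a2 y)"
    by (simp only: pairing_append_left lin_ext2_mult lin_ext2_coprodA_Cons)
  finally show ?thesis by (simp add: coprod_compat_def)
qed

lemma coprod_compat_below:
  assumes IH: "\<And>x a y. EF_count x < N \<Longrightarrow> coprod_compat a x y"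
  shows "EF_count x \<le> N \<Longrightarrow> coprod_compat a x y"
proof (induction a arbitrary: x y)
  case Nil
  show ?case by (rule coprod_compat_Nil)
next
  case (Cons g w x y)
  show ?case
  proof (rule coprod_compat_Cons)
    fix x1 x2 y' assume "(x1, x2) \<in> supp2 (coprodU n x)"
    then have "EF_count x1 \<le> N" "EF_count x2 \<le> N"
      using supp2_coprodU_EF_count Cons.prems by fastforce+
    then show "coprod_compat [g] x1 y' \<and> coprod_compat w x2 y'"
      using coprod_compat_gen[OF IH] Cons.IH by blast
  qed
qed

lemma coprod_compat_all: "coprod_compat a x y"
proof -
  have "EF_count x \<le> N \<Longrightarrow> coprod_compat a x y" for N a x y
  proof (induction N arbitrary: a x y rule: less_induct)
    case (less N)
    have "\<And>x a y. EF_count x < N \<Longrightarrow> coprod_compat a x y" using less.IH by blast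
    then show ?case using coprod_compat_below less.prems by blast
  qed
  then show ?thesis by blast
qed

end

theorem corollary4p3:
  fixes q :: complex and n :: nat
  assumes "1 < n" and "primitive_root_of_unity n q"
  shows "\<exists>P. hopf_pairing q n P \<and>
     P [GX] [GF] = 1 \<and> P [GT] [GK] = q \<and> P [GY] [GE] = 1 \<and>
     (\<forall>i j k i' j' k'. i < n \<longrightarrow> j < n \<longrightarrow> k < n \<longrightarrow> i' < n \<longrightarrow> j' < n \<longrightarrow> k' < n \<longrightarrow>
        P (monoA i j k) (monoU i' j' k') =
          (if i = i' \<and> k = k' then q ^ (j * j') * qfact (inverse q) i * qfact q k else 0)) \<and>
     (\<forall>i j k i' j' k'. i < n \<longrightarrow> j < n \<longrightarrow> k < n \<longrightarrow> i' < n \<longrightarrow> j' < n \<longrightarrow> k' < n \<longrightarrow>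
        pairL P (dual_elt q n i j k) (monoU i' j' k') =
          (if i = i' \<and> j = j' \<and> k = k' then 1 else 0))"
proof -
  interpret primitive_root q n
    using assms by unfold_locales
  have "hopf_pairing q n pairing"
    unfolding hopf_pairing_def
    using pairing_relsA pairing_relsU pairing_append_left coprod_compat_all pairing_Nil_left pairing_Nil_right
    by (simp add: coprod_compat_def pair2L_lin_ext2 pair2R_lin_ext2)
  then show ?thesis
    using pairing_gens pairing_mono pairing_dual_elt_monoU by blast
qed

end
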